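(* Let $\mathrm{R}$ be a real closed field, $\mathrm{C}=\mathrm{R}[i]$, let $F/G,\,H/I\in\mathrm{C}(Z)\setminus\{0\}$ and let $\Gamma=[x_0,x_1]\times[y_0,y_1]\subset\mathrm{R}^2$ with $x_0<x_1$, $y_0<y_1$. Then $$\mathrm{W}\Big(\frac FG\cdot\frac HI\ \Big|\ \partial\Gamma\Big)=\mathrm{W}(F/G\mid\partial\Gamma)+\mathrm{W}(H/I\mid\partial\Gamma).$$
   Context: For nonzero $P\in\mathrm{R}[X]$ and $x\in\mathrm{R}$ write uniquely $P=(X-x)^{\mathrm{mult}_x(P)}P_x$ with $P_x(x)\neq0$; for $P,Q\neq0$ set $\mathrm{val}_x(P/Q)=\mathrm{mult}_x(P)-\mathrm{mult}_x(Q)$. For $P,Q\in\mathrm{R}[X]$, $x\in\mathrm{R}$: $\mathrm{Ind}^+_x(P,Q)=\tfrac12\,\mathrm{sign}(P_x(x)Q_x(x))$ and $\mathrm{Ind}^-_x(P,Q)=\tfrac12(-1)^{\mathrm{val}_x(P/Q)}\mathrm{sign}(P_x(x)Q_x(x))$ if $P\ne0$, $Q\neq0$ and $\mathrm{val}_x(P/Q)<0$, and both are $0$ otherwise; $\mathrm{Ind}_x=\mathrm{Ind}^+_x-\mathrm{Ind}^-_x$. For $a<b$, $\mathrm{Ind}_a^b(P,Q)=\mathrm{Ind}_a^+(P,Q)+\sum_{x\in(a,b)}\mathrm{Ind}_x(P,Q)-\mathrm{Ind}_b^-(P,Q)$; $\mathrm{Ind}_a^b=-\mathrm{Ind}_b^a$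 if $b<a$, and $\mathrm{Ind}_a^a=0$. For $F\in\mathrm{C}[X,Y]$ let $F_{\rm re},F_{\rm im}\in\mathrm{R}[X,Y]$ with $F=F_{\rm re}+iF_{\rm im}$, and $\overline F=F_{\rm re}-iF_{\rm im}$. Define $\mathrm{w}(F\mid\partial\Gamma)=\tfrac12\big(\mathrm{Ind}_{x_0}^{x_1}(F_{\rm re}(T,y_0),F_{\rm im}(T,y_0))+\mathrm{Ind}_{y_0}^{y_1}(F_{\rm re}(x_1,T),F_{\rm im}(x_1,T))+\mathrm{Ind}_{x_1}^{x_0}(F_{\rm re}(T,y_1),F_{\rm im}(T,y_1))+\mathrm{Ind}_{y_1}^{y_0}(F_{\rm re}(x_0,T),F_{\rm im}(x_0,T))\big)$ and $\mathrm{W}(F\mid\partial\Gamma)=\tfrac12\big(\mathrm{w}(F\mid\partial\Gamma)+\mathrm{w}(iF\mid\partial\Gamma)\big)$. $\mathrm{C}[Z]\subset\mathrm{C}[X,Y]$ via $Z=X+iY$. For $F,G\in\mathrm{C}[X,Y]$, $G\neq0$, $\mathrm{W}(F/G\mid\partial\Gamma):=\mathrm{W}(F\overline G\mid\partial\Gamma)$ (independent of the representation). *)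

theory Defs
  imports "HOL-Computational_Algebra.Polynomial"
begin

class real_closed_field = linordered_field +
  assumes rcf_sqrt: "0 \<le> x \<Longrightarrow> \<exists>y. x = y * y"
  assumes rcf_odd_root: "odd n \<Longrightarrow> c n \<noteq> 0 \<Longrightarrow> \<exists>x. (\<Sum>i\<le>n. c i * x ^ i) = 0"

datatype 'a cpx = Cpx (Re_c: 'a) (Im_c: 'a)

lemma cpx_eqI: "Re_c x = Re_c y \<Longrightarrow> Im_c x = Im_c y \<Longrightarrow> x = y"
  by (cases x; cases y) auto

instantiation cpx :: (comm_ring_1) comm_ring_1
begin
definition "0 = Cpx 0 0"
definition "1 = Cpx 1 0"
definition "x + y = Cpx (Re_c x + Re_c y) (Im_c x + Im_c y)"
definition "x - y = Cpx (Re_c x - Re_c y) (Im_c x - Im_c y)"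
definition "- x = Cpx (- Re_c x) (- Im_c x)"
definition "x * y = Cpx (Re_c x * Re_c y - Im_c x * Im_c y) (Re_c x * Im_c y + Im_c x * Re_c y)"
instance
  by standard (auto intro!: cpx_eqI simp: zero_cpx_def one_cpx_def plus_cpx_def minus_cpx_def
      uminus_cpx_def times_cpx_def algebra_simps)
end

definition ii :: "'a::comm_ring_1 cpx" where "ii = Cpx 0 1"
definition cnj :: "'a::comm_ring_1 cpx \<Rightarrow> 'a cpx" where "cnj z = Cpx (Re_c z) (- Im_c z)"

definition mult_at :: "'a::linordered_field \<Rightarrow> 'a poly \<Rightarrow> nat" where
  "mult_at x P = order x P"

definition cof_at :: "'a::linordered_field \<Rightarrow> 'a poly \<Rightarrow> 'a poly" where
  "cof_at x P = P div ([:-x, 1:] ^ mult_at x P)"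

definition val_at :: "'a::linordered_field \<Rightarrow> 'a poly \<Rightarrow> 'a poly \<Rightarrow> int" where
  "val_at x P Q = int (mult_at x P) - int (mult_at x Q)"

definition Ind_plus :: "'a::linordered_field \<Rightarrow> 'a poly \<Rightarrow> 'a poly \<Rightarrow> 'a" where
  "Ind_plus x P Q = (if P \<noteq> 0 \<and> Q \<noteq> 0 \<and> val_at x P Q < 0
      then sgn (poly (cof_at x P) x * poly (cof_at x Q) x) / 2 else 0)"

definition Ind_minus :: "'a::linordered_field \<Rightarrow> 'a poly \<Rightarrow> 'a poly \<Rightarrow> 'a" where
  "Ind_minus x P Q = (if P \<noteq> 0 \<and> Q \<noteq> 0 \<and> val_at x P Q < 0
      then (-1) powi (val_at x P Q) * sgn (poly (cof_at x P) x * poly (cof_at x Q) x) / 2 else 0)"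

definition Ind_at :: "'a::linordered_field \<Rightarrow> 'a poly \<Rightarrow> 'a poly \<Rightarrow> 'a" where
  "Ind_at x P Q = Ind_plus x P Q - Ind_minus x P Q"

text \<open>Index on [a,b] for a < b; the sum over (a,b) ranges over the (finite) support.\<close>
definition Ind_lt :: "'a::linordered_field \<Rightarrow> 'a \<Rightarrow> 'a poly \<Rightarrow> 'a poly \<Rightarrow> 'a" where
  "Ind_lt a b P Q = Ind_plus a P Q
     + (\<Sum>x\<in>{x. a < x \<and> x < b \<and> Ind_at x P Q \<noteq> 0}. Ind_at x P Q) - Ind_minus b P Q"

definition Ind :: "'a::linordered_field \<Rightarrow> 'a \<Rightarrow> 'a poly \<Rightarrow> 'a poly \<Rightarrow> 'a" where
  "Ind a b P Q = (if a < b then Ind_lt a b P Q else if b < a then - Ind_lt b a P Q else 0)"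

section \<open>Bivariate polynomials: 'c poly poly, outer variable Y, inner variable X\<close>

definition re2 :: "'a::comm_ring_1 cpx poly poly \<Rightarrow> 'a poly poly" where
  "re2 F = map_poly (map_poly Re_c) F"
definition im2 :: "'a::comm_ring_1 cpx poly poly \<Rightarrow> 'a poly poly" where
  "im2 F = map_poly (map_poly Im_c) F"
definition conj2 :: "'a::comm_ring_1 cpx poly poly \<Rightarrow> 'a cpx poly poly" where
  "conj2 F = map_poly (map_poly cnj) F"

text \<open>F(T, y) and F(x, T)\<close>
definition at_Y :: "'a::comm_ring_1 poly poly \<Rightarrow> 'a \<Rightarrow> 'a poly" where
  "at_Y F y = poly F [:y:]"
definition at_X :: "'a::comm_ring_1 poly poly \<Rightarrow> 'a \<Rightarrow> 'a poly" where
  "at_X F x = map_poly (\<lambda>p. poly p x) F"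

definition wind :: "'a::linordered_field cpx poly poly \<Rightarrow> 'a \<Rightarrow> 'a \<Rightarrow> 'a \<Rightarrow> 'a \<Rightarrow> 'a" where
  "wind F x0 x1 y0 y1 =
     (Ind x0 x1 (at_Y (re2 F) y0) (at_Y (im2 F) y0)
    + Ind y0 y1 (at_X (re2 F) x1) (at_X (im2 F) x1)
    + Ind x1 x0 (at_Y (re2 F) y1) (at_Y (im2 F) y1)
    + Ind y1 y0 (at_X (re2 F) x0) (at_X (im2 F) x0)) / 2"

definition Wind :: "'a::linordered_field cpx poly poly \<Rightarrow> 'a \<Rightarrow> 'a \<Rightarrow> 'a \<Rightarrow> 'a \<Rightarrow> 'a" where
  "Wind F x0 x1 y0 y1 = (wind F x0 x1 y0 y1 + wind ([:[:ii:]:] * F) x0 x1 y0 y1) / 2"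

text \<open>Embedding C[Z] into C[X,Y] via Z = X + iY\<close>
definition embedZ :: "'a::comm_ring_1 cpx poly \<Rightarrow> 'a cpx poly poly" where
  "embedZ F = poly (map_poly (\<lambda>c. [:[:c:]:]) F) [:[:0, 1:], [:ii:]:]"

text \<open>W(F/G | boundary) := W(F * conj G | boundary)\<close>
definition Wind_frac :: "'a::linordered_field cpx poly \<Rightarrow> 'a cpx poly \<Rightarrow> 'a \<Rightarrow> 'a \<Rightarrow> 'a \<Rightarrow> 'a \<Rightarrow> 'a" where
  "Wind_frac F G x0 x1 y0 y1 = Wind (embedZ F * conj2 (embedZ G)) x0 x1 y0 y1"

end

theory Submission
  imports Defs "HOL-Algebra.Algebraic_Closure_Type"
begin

(* Restricted to a horizontal or vertical edge of the rectangle, a complex polynomial A splits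
   into real and imaginary parts, and the edge term of W is a sum of local jumps of the Cauchy
   index at the finitely many points where these parts vanish.  At a point x the jump to the
   right only depends on the lowest coefficient gamma of A(x + T) and on the value of A slightly
   to the right of x, through the signs of their real and imaginary parts.  Encoding the position
   of a nonzero complex number by one of eight sectors (four open quadrants, four half axes),
   the jump of a product differs from the sum of the jumps of the factors by half the "sector
   defect" K(gamma1, gamma2) - K(A1(t), A2(t)), where K(z, w) in [-2, 2] is the discrepancy
   between the sector of z w and the sum of the sectors of z and w.  Summed along an edge these
   corrections telescope to the values of K at the two endpoints, and at a corner the lowest
   coefficients seen along the two incident edges differ by a power of i, which leaves K
   unchanged.  So all corrections cancel around the boundary of the rectangle.

   Comparing signs at nearby points needs the intermediate value property of polynomials over a
   real closed field; with the given axioms (square roots, roots of odd degree polynomials) it is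
   obtained from Laplace's proof that every real polynomial has a root in R[i]. *)

hide_const (open) Polynomials.degree Polynomials.lead_coeff Coset.order up_ring.monom
  up_ring.coeff module.smult

section \<open>Polynomials over a real closed field\<close>

lemma map_poly_add_hom:
  assumes "f 0 = 0" "\<And>x y. f (x + y) = f x + f y"
  shows "map_poly f (p + q) = map_poly f p + map_poly f q"
  by (rule poly_eqI) (simp add: coeff_map_poly assms)

lemma map_poly_mult_hom:
  fixes f :: "'a::comm_semiring_1 \<Rightarrow> 'b::comm_semiring_1"
  assumes f0: "f 0 = 0" and fa: "\<And>x y. f (x + y) = f x + f y" and fm: "\<And>x y. f (x * y) = f x * f y"
  shows "map_poly f (p * q) = map_poly f p * map_poly f q"
proof (induction p)
  case 0 then show ?case by (simp add: f0)
next
  case (pCons a p)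
  have sm: "map_poly f (smult a q) = smult (f a) (map_poly f q)"
    by (rule poly_eqI) (simp add: coeff_map_poly f0 fm)
  have "map_poly f (pCons a p * q) = map_poly f (smult a q + pCons 0 (p * q))" by simp
  also have "\<dots> = smult (f a) (map_poly f q) + pCons 0 (map_poly f p * map_poly f q)"
    using pCons by (simp add: map_poly_add_hom[OF f0 fa] sm map_poly_pCons f0)
  also have "\<dots> = map_poly f (pCons a p) * map_poly f q"
    by (simp add: map_poly_pCons f0)
  finally show ?case .
qed

lemma poly_map_poly_hom:
  fixes f :: "'a::comm_semiring_1 \<Rightarrow> 'b::comm_semiring_1"
  assumes f0: "f 0 = 0" and fa: "\<And>x y. f (x + y) = f x + f y" and fm: "\<And>x y. f (x * y) = f x * f y"
  shows "poly (map_poly f p) (f x) = f (poly p x)"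
  by (induction p) (simp_all add: map_poly_pCons f0 fa fm)

lemma map_poly_to_ac_mult: "map_poly to_ac (p * q) = map_poly to_ac p * map_poly to_ac (q :: 'a::field poly)"
  by (rule map_poly_mult_hom) simp_all

lemma map_poly_to_ac_add: "map_poly to_ac (p + q) = map_poly to_ac p + map_poly to_ac (q :: 'a::field poly)"
  by (rule map_poly_add_hom) simp_all

lemma poly_map_poly_to_ac: "poly (map_poly to_ac p) (to_ac x) = to_ac (poly p (x::'a::field))"
  by (rule poly_map_poly_hom) simp_all

definition ac_i :: "'a::field alg_closure" where "ac_i = (SOME z. z * z = -1)"

lemma ac_i_squared: "ac_i * ac_i = (-1 :: 'a::field alg_closure)"
proof -
  have "\<exists>z::'a alg_closure. poly [:1, 0, 1:] z = 0"
    by (rule alg_closed_imp_poly_has_root) simp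
  then obtain z :: "'a alg_closure" where "1 + z * z = 0" by auto
  hence "z * z = -1" by (metis add.commute add_eq_0_iff2)
  hence "\<exists>z::'a alg_closure. z * z = -1" by blast
  thus ?thesis unfolding ac_i_def by (rule someI_ex)
qed

definition in_Ri :: "'a::field alg_closure \<Rightarrow> bool" where
  "in_Ri z \<longleftrightarrow> (\<exists>a b. z = to_ac a + to_ac b * ac_i)"

abbreviation in_base :: "'a::field alg_closure \<Rightarrow> bool" where
  "in_base z \<equiv> z \<in> range to_ac"

lemma in_Ri_to_ac [simp]: "in_Ri (to_ac a)"
  unfolding in_Ri_def by (rule exI[of _ a], rule exI[of _ 0]) simp

lemma in_Ri_add [intro]: "in_Ri z \<Longrightarrow> in_Ri w \<Longrightarrow> in_Ri (z + w)"
proof -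
  assume "in_Ri z" "in_Ri w"
  then obtain a b c d where z: "z = to_ac a + to_ac b * ac_i" and w: "w = to_ac c + to_ac d * ac_i"
    unfolding in_Ri_def by blast
  have "z + w = to_ac (a + c) + to_ac (b + d) * ac_i" by (simp add: z w algebra_simps)
  thus ?thesis unfolding in_Ri_def by blast
qed

lemma in_Ri_uminus [intro]: "in_Ri z \<Longrightarrow> in_Ri (- z)"
proof -
  assume "in_Ri z"
  then obtain a b where z: "z = to_ac a + to_ac b * ac_i" unfolding in_Ri_def by blast
  have "- z = to_ac (- a) + to_ac (- b) * ac_i" by (simp add: z algebra_simps)
  thus ?thesis unfolding in_Ri_def by blast
qed

lemma in_Ri_diff [intro]: "in_Ri z \<Longrightarrow> in_Ri w \<Longrightarrow> in_Ri (z - w)"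
  using in_Ri_add[of z "- w"] in_Ri_uminus[of w] by simp

lemma ac_i_mult_formula:
  "(to_ac a + to_ac b * ac_i) * (to_ac c + to_ac d * ac_i) =
   to_ac (a * c - b * d) + to_ac (a * d + b * c) * (ac_i :: 'a::field alg_closure)"
proof -
  have "(to_ac a + to_ac b * ac_i) * (to_ac c + to_ac d * ac_i) =
        to_ac a * to_ac c + (to_ac b * to_ac d) * (ac_i * ac_i)
          + (to_ac a * to_ac d + to_ac b * to_ac c) * (ac_i :: 'a alg_closure)"
    by (simp only: distrib_left distrib_right mult.assoc mult.commute mult.left_commute
        add.assoc add.commute add.left_commute)
  also have "\<dots> = to_ac (a * c - b * d) + to_ac (a * d + b * c) * ac_i"
    by (simp add: ac_i_squared)
  finally show ?thesis .
qed

lemma in_Ri_mult [intro]: "in_Ri z \<Longrightarrow> in_Ri w \<Longrightarrow> in_Ri (z * w)"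
proof -
  assume "in_Ri z" "in_Ri w"
  then obtain a b c d where z: "z = to_ac a + to_ac b * ac_i" and w: "w = to_ac c + to_ac d * ac_i"
    unfolding in_Ri_def by blast
  show ?thesis unfolding in_Ri_def z w ac_i_mult_formula by blast
qed

lemma ac_i_independent:
  fixes x y :: "'a::linordered_field"
  assumes "to_ac x + to_ac y * ac_i = 0"
  shows "x = 0 \<and> y = 0"
proof (cases "y = 0")
  case True thus ?thesis using assms by simp
next
  case False
  have "to_ac y * ac_i = - to_ac x" using assms by (simp add: add_eq_0_iff)
  have ny: "to_ac y \<noteq> (0::'a alg_closure)" using False by simp
  have "ac_i = (to_ac y * ac_i) / to_ac y" using ny by simp
  also have "\<dots> = - to_ac x / to_ac y" using \<open>to_ac y * ac_i = - to_ac x\<close> by simp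
  finally have "ac_i = to_ac (- x / y)" by simp
  hence "to_ac ((- x / y) * (- x / y)) = (-1 :: 'a alg_closure)"
    using ac_i_squared by (metis to_ac_mult)
  hence "(- x / y) * (- x / y) = -1"
    by (metis to_ac_1 to_ac_eq_iff to_ac_minus)
  moreover have "(- x / y) * (- x / y) \<ge> 0" by simp
  ultimately show ?thesis by simp
qed

lemma in_Ri_inverse [intro]:
  fixes z :: "'a::linordered_field alg_closure"
  assumes "in_Ri z" shows "in_Ri (inverse z)"
proof -
  obtain a b where z: "z = to_ac a + to_ac b * ac_i" using assms unfolding in_Ri_def by blast
  show ?thesis
  proof (cases "z = 0")
    case True thus ?thesis using in_Ri_to_ac[of 0] by simp
  next
    case False
    define n where "n = a * a + b * b"
    have "a \<noteq> 0 \<or> b \<noteq> 0" using z False by auto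
    hence n: "n \<noteq> 0"
      unfolding n_def by (metis add_nonneg_eq_0_iff mult_eq_0_iff zero_le_square)
    have "z * (to_ac (a / n) + to_ac (- b / n) * ac_i) =
          to_ac (a * (a / n) - b * (- b / n)) + to_ac (a * (- b / n) + b * (a / n)) * ac_i"
      unfolding z by (rule ac_i_mult_formula)
    also have "a * (a / n) - b * (- b / n) = 1" using n
      by (simp add: n_def diff_divide_distrib[symmetric] add_divide_distrib[symmetric])
    also have "a * (- b / n) + b * (a / n) = 0"
      by (simp add: algebra_simps)
    finally have "z * (to_ac (a / n) + to_ac (- b / n) * ac_i) = 1" by simp
    hence "inverse z = to_ac (a / n) + to_ac (- b / n) * ac_i"
      by (rule inverse_unique)
    thus ?thesis unfolding in_Ri_def by blast
  qed
qed

lemma in_Ri_divide [intro]: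
  fixes z :: "'a::linordered_field alg_closure"
  shows "in_Ri z \<Longrightarrow> in_Ri w \<Longrightarrow> in_Ri (z / w)"
  by (simp add: divide_inverse in_Ri_inverse in_Ri_mult)

lemma rcf_sqrt_nonneg:
  fixes x :: "'a::real_closed_field"
  assumes "0 \<le> x" shows "\<exists>y\<ge>0. y * y = x"
proof -
  obtain y where "x = y * y" using rcf_sqrt[OF assms] by blast
  thus ?thesis by (intro exI[of _ "\<bar>y\<bar>"]) (simp add: abs_mult_self_eq)
qed

lemma in_Ri_sqrt:
  fixes z :: "'a::real_closed_field alg_closure"
  assumes "in_Ri z" shows "\<exists>w. in_Ri w \<and> w * w = z"
proof -
  obtain a b where z: "z = to_ac a + to_ac b * ac_i" using assms unfolding in_Ri_def by blast
  obtain r where r: "r \<ge> 0" "r * r = a * a + b * b"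
    using rcf_sqrt_nonneg[of "a * a + b * b"] by auto
  have ra: "\<bar>a\<bar> \<le> r"
  proof (rule ccontr)
    assume "\<not> \<bar>a\<bar> \<le> r"
    hence "r * r < \<bar>a\<bar> * \<bar>a\<bar>" using r(1) by (intro mult_strict_mono) auto
    thus False using r(2) by (simp add: abs_mult_self_eq)
  qed
  have "0 \<le> (r + a) / 2" "0 \<le> (r - a) / 2" using ra by auto
  then obtain u v0 where u: "u \<ge> 0" "u * u = (r + a) / 2" and v0: "v0 \<ge> 0" "v0 * v0 = (r - a) / 2"
    using rcf_sqrt_nonneg by metis
  have "(2 * u * v0) * (2 * u * v0) = 4 * (u * u) * (v0 * v0)" by (simp add: algebra_simps)
  also have "\<dots> = (r + a) * (r - a)" by (simp add: u v0)
  also have "\<dots> = \<bar>b\<bar> * \<bar>b\<bar>"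
    by (simp add: algebra_simps r(2) abs_mult_self_eq)
  finally have "2 * u * v0 = \<bar>b\<bar>"
    using u(1) v0(1)
    by (metis abs_ge_zero mult_nonneg_nonneg zero_le_numeral power2_eq_iff_nonneg power2_eq_square)
  define v where "v = (if b \<ge> 0 then v0 else - v0)"
  have uv: "2 * u * v = b" using \<open>2 * u * v0 = \<bar>b\<bar>\<close> by (auto simp: v_def)
  have vv: "v * v = (r - a) / 2" by (simp add: v_def v0)
  have "(to_ac u + to_ac v * ac_i) * (to_ac u + to_ac v * ac_i) =
        to_ac (u * u - v * v) + to_ac (u * v + v * u) * ac_i"
    by (rule ac_i_mult_formula)
  also have "u * v + v * u = 2 * u * v" by simp
  also have "u * u - v * v = a" by (simp add: u vv field_simps)
  finally show ?thesis using uv z unfolding in_Ri_def by blast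
qed

lemma in_Ri_of_sum_mult:
  fixes a b :: "'a::real_closed_field alg_closure"
  assumes "in_Ri (a + b)" "in_Ri (a * b)"
  shows "in_Ri a"
proof -
  obtain w where w: "in_Ri w" "w * w = (a + b) * (a + b) - 4 * (a * b)"
    using in_Ri_sqrt[of "(a + b) * (a + b) - 4 * (a * b)"] assms
    by (metis in_Ri_diff in_Ri_mult in_Ri_to_ac to_ac_numeral)
  have "(2 * a - (a + b) - w) * (2 * a - (a + b) + w) = (2 * a - (a + b)) * (2 * a - (a + b)) - w * w"
    by (simp add: algebra_simps)
  also have "\<dots> = 0" unfolding w(2) by (simp add: algebra_simps)
  finally have "2 * a - (a + b) - w = 0 \<or> 2 * a - (a + b) + w = 0" by simp
  hence "2 * a = (a + b) + w \<or> 2 * a = (a + b) - w" by (auto simp: algebra_simps)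
  hence "a = ((a + b) + w) / 2 \<or> a = ((a + b) - w) / 2" by (auto simp: field_simps)
  thus ?thesis
    using assms(1) w(1) by (metis in_Ri_add in_Ri_diff in_Ri_divide in_Ri_to_ac to_ac_numeral)
qed

lemma in_base_add [intro]: "in_base z \<Longrightarrow> in_base w \<Longrightarrow> in_base (z + w)"
  by (auto simp flip: to_ac_add)
lemma in_base_mult [intro]: "in_base z \<Longrightarrow> in_base w \<Longrightarrow> in_base (z * w)"
  by (auto simp flip: to_ac_mult)
lemma in_base_diff [intro]: "in_base z \<Longrightarrow> in_base w \<Longrightarrow> in_base (z - w)"
  by (auto simp flip: to_ac_diff)
lemma in_base_uminus [intro]: "in_base z \<Longrightarrow> in_base (- z)"
  by (auto simp flip: to_ac_minus)
lemma in_base_divide [intro]: "in_base z \<Longrightarrow> in_base w \<Longrightarrow> in_base (z / w)"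
  by (auto simp flip: to_ac_divide)
lemma in_base_of_nat [intro]: "in_base (of_nat n)"
  by (metis rangeI to_ac_of_nat)
lemma in_base_numeral [intro]: "in_base (numeral n)"
  by (metis rangeI to_ac_numeral)
lemma in_base_1 [intro]: "in_base 1" by (metis rangeI to_ac_1)
lemma in_base_power [intro]: "in_base z \<Longrightarrow> in_base (z ^ n)"
  by (induction n) auto
lemma in_base_sum [intro]: "(\<And>x. x \<in> A \<Longrightarrow> in_base (f x)) \<Longrightarrow> in_base (sum f A)"
  by (induction A rule: infinite_finite_induct) auto

definition power_sum :: "'b::comm_ring_1 multiset \<Rightarrow> nat \<Rightarrow> 'b" where
  "power_sum B k = (\<Sum>b\<in>#B. b ^ k)"

definition esym_poly :: "'b::comm_ring_1 multiset \<Rightarrow> 'b poly" where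
  "esym_poly B = (\<Prod>b\<in>#B. [:1, -b:])"

definition root_poly :: "'b::comm_ring_1 multiset \<Rightarrow> 'b poly" where
  "root_poly B = (\<Prod>b\<in>#B. [:-b, 1:])"

lemma power_sum_add_mset [simp]: "power_sum (add_mset b B) m = power_sum B m + b ^ m"
  by (simp add: power_sum_def add.commute)

lemma power_sum_empty [simp]: "power_sum {#} m = 0"
  by (simp add: power_sum_def)

lemma esym_poly_add_mset: "esym_poly (add_mset b B) = [:1, -b:] * esym_poly B"
  by (simp add: esym_poly_def)

lemma coeff_esym_poly_0 [simp]: "coeff (esym_poly B) 0 = 1"
  by (induction B) (simp_all add: esym_poly_add_mset esym_poly_def coeff_mult_0)

lemma coeff_esym_poly_add_mset_Suc:
  "coeff (esym_poly (add_mset b B)) (Suc i) = coeff (esym_poly B) (Suc i) - b * coeff (esym_poly B) i"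
  by (simp add: esym_poly_add_mset)

lemma sum_coeff_esym_poly_add_mset:
  fixes f :: "nat \<Rightarrow> 'b::comm_ring_1" and b :: 'b and B :: "'b multiset"
  defines "c \<equiv> coeff (esym_poly B)" and "c' \<equiv> coeff (esym_poly (add_mset b B))"
  shows "(\<Sum>i\<le>k. c' i * f (Suc k - i)) = (\<Sum>i\<le>k. c i * f (Suc k - i)) - b * (\<Sum>i<k. c i * f (k - i))"
proof (cases k)
  case 0 thus ?thesis by (simp add: c_def c'_def)
next
  case (Suc k')
  have c'0: "c' 0 = c 0" by (simp add: c'_def c_def)
  have c'S: "c' (Suc i) = c (Suc i) - b * c i" for i
    by (simp add: c'_def c_def coeff_esym_poly_add_mset_Suc)
  have "(\<Sum>i\<le>Suc k'. c' i * f (Suc (Suc k') - i)) =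
        c' 0 * f (Suc (Suc k')) + (\<Sum>i\<le>k'. c' (Suc i) * f (Suc k' - i))"
    by (subst sum.atMost_Suc_shift) simp
  also have "\<dots> = c 0 * f (Suc (Suc k')) + (\<Sum>i\<le>k'. c (Suc i) * f (Suc k' - i))
                   - b * (\<Sum>i\<le>k'. c i * f (Suc k' - i))"
    by (simp add: c'0 c'S algebra_simps sum_subtractf sum_distrib_left)
  also have "c 0 * f (Suc (Suc k')) + (\<Sum>i\<le>k'. c (Suc i) * f (Suc k' - i)) =
             (\<Sum>i\<le>Suc k'. c i * f (Suc (Suc k') - i))"
    by (subst sum.atMost_Suc_shift) simp
  finally show ?thesis using Suc by (simp add: lessThan_Suc_atMost)
qed

lemma sum_coeff_esym_poly_add_mset_power:
  "(\<Sum>i\<le>k. coeff (esym_poly (add_mset b B)) i * b ^ (Suc k - i)) = coeff (esym_poly B) k * b"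
proof (induction k)
  case (Suc k)
  have "(\<Sum>i\<le>k. coeff (esym_poly (add_mset b B)) i * b ^ (Suc (Suc k) - i))
      = b * (\<Sum>i\<le>k. coeff (esym_poly (add_mset b B)) i * b ^ (Suc k - i))"
    by (simp add: sum_distrib_left Suc_diff_le algebra_simps)
  thus ?case by (simp add: Suc.IH coeff_esym_poly_add_mset_Suc algebra_simps)
qed simp

lemma newton_identity:
  fixes B :: "'b::comm_ring_1 multiset"
  shows "(\<Sum>i\<le>k. coeff (esym_poly B) i * power_sum B (Suc k - i)) = - of_nat (Suc k) * coeff (esym_poly B) (Suc k)"
proof (induction B arbitrary: k)
  case empty
  show ?case by (simp add: esym_poly_def)
next
  case (add b B)
  define c where "c = coeff (esym_poly B)"
  define c' where "c' = coeff (esym_poly (add_mset b B))"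
  define p where "p = power_sum B"
  have IH: "(\<Sum>i\<le>k. c i * p (Suc k - i)) = - of_nat (Suc k) * c (Suc k)" for k
    using add.IH[of k] by (simp add: c_def p_def)
  have IH': "(\<Sum>i<k. c i * p (k - i)) = - of_nat k * c k" for k
    using IH[of "k - 1"] by (cases k) (simp_all add: lessThan_Suc_atMost)
  have "(\<Sum>i\<le>k. c' i * power_sum (add_mset b B) (Suc k - i)) =
        (\<Sum>i\<le>k. c' i * p (Suc k - i)) + (\<Sum>i\<le>k. c' i * b ^ (Suc k - i))"
    by (simp add: p_def algebra_simps sum.distrib)
  also have "\<dots> = - of_nat (Suc k) * c (Suc k) + of_nat k * b * c k + c k * b"
    unfolding c'_def sum_coeff_esym_poly_add_mset_power sum_coeff_esym_poly_add_mset
    by (simp add: IH IH' flip: c_def)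
  also have "\<dots> = - of_nat (Suc k) * c' (Suc k)"
    by (simp add: c_def c'_def coeff_esym_poly_add_mset_Suc algebra_simps)
  finally show ?case by (simp add: c'_def)
qed

lemma power_sum_in_base:
  fixes B :: "'a::field_char_0 alg_closure multiset"
  assumes "\<And>i. in_base (coeff (esym_poly B) i)"
  shows "in_base (power_sum B m)"
proof (induction m rule: less_induct)
  case (less m)
  show ?case
  proof (cases m)
    case 0
    have "power_sum B 0 = of_nat (size B)" by (simp add: power_sum_def)
    thus ?thesis using 0 by auto
  next
    case (Suc k)
    have "(\<Sum>i\<le>k. coeff (esym_poly B) i * power_sum B (Suc k - i)) =
          coeff (esym_poly B) 0 * power_sum B (Suc k - 0)
          + (\<Sum>i\<in>{..k} - {0}. coeff (esym_poly B) i * power_sum B (Suc k - i))"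
      by (subst sum.remove[of _ 0]) auto
    hence e: "power_sum B (Suc k) = - of_nat (Suc k) * coeff (esym_poly B) (Suc k) -
             (\<Sum>i\<in>{..k} - {0}. coeff (esym_poly B) i * power_sum B (Suc k - i))"
      using newton_identity[of B k] by (simp add: algebra_simps)
    have rest: "in_base (\<Sum>i\<in>{..k} - {0}. coeff (esym_poly B) i * power_sum B (Suc k - i))"
      using less Suc assms by (intro in_base_sum in_base_mult) auto
    have "in_base (- of_nat (Suc k) * coeff (esym_poly B) (Suc k) -
             (\<Sum>i\<in>{..k} - {0}. coeff (esym_poly B) i * power_sum B (Suc k - i)))"
      by (rule in_base_diff[OF in_base_mult[OF in_base_uminus[OF in_base_of_nat] assms] rest])
    thus ?thesis by (simp only: e Suc)
  qed
qed

lemma esym_poly_coeff_in_base: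
  fixes B :: "'a::field_char_0 alg_closure multiset"
  assumes "\<And>m. in_base (power_sum B m)"
  shows "in_base (coeff (esym_poly B) i)"
proof (induction i rule: less_induct)
  case (less i)
  show ?case
  proof (cases i)
    case 0 thus ?thesis by auto
  next
    case (Suc k)
    have nz: "of_nat (Suc k) \<noteq> (0 :: 'a alg_closure)"
      by (metis of_nat_eq_0_iff nat.distinct(1))
    have eq: "of_nat (Suc k) * coeff (esym_poly B) (Suc k)
              = - (\<Sum>i\<le>k. coeff (esym_poly B) i * power_sum B (Suc k - i))"
      using newton_identity[of B k] by (metis minus_minus mult_minus_left)
    have "coeff (esym_poly B) (Suc k)
          = - (\<Sum>i\<le>k. coeff (esym_poly B) i * power_sum B (Suc k - i)) / of_nat (Suc k)"
      using nz by (simp only: eq[symmetric]) (metis nonzero_mult_div_cancel_left)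
    moreover have "in_base (\<Sum>i\<le>k. coeff (esym_poly B) i * power_sum B (Suc k - i))"
      using less Suc assms by (intro in_base_sum in_base_mult) auto
    ultimately show ?thesis using Suc by auto
  qed
qed

lemma root_poly_add_mset: "root_poly (add_mset b B) = [:-b, 1:] * root_poly B"
  by (simp add: root_poly_def)

lemma root_poly_nonzero: "root_poly B \<noteq> (0 :: 'b::idom poly)"
  by (auto simp: root_poly_def)

lemma reflect_root_poly: "reflect_poly (root_poly B) = esym_poly (B :: 'b::idom multiset)"
proof (induction B)
  case empty thus ?case by (simp add: root_poly_def esym_poly_def)
next
  case (add b B)
  have r: "reflect_poly [:-b, 1:] = [:1, -b:]"
    by (rule poly_eqI) (auto simp: coeff_reflect_poly coeff_pCons split: nat.splits)
  have "reflect_poly (root_poly (add_mset b B)) = reflect_poly [:-b, 1:] * reflect_poly (root_poly B)"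
    by (simp only: root_poly_add_mset reflect_poly_mult)
  also have "\<dots> = esym_poly (add_mset b B)" by (simp only: r add esym_poly_add_mset)
  finally show ?case .
qed

lemma degree_root_poly: "degree (root_poly B) = size (B :: 'b::idom multiset)"
proof (induction B)
  case empty thus ?case by (simp add: root_poly_def)
next
  case (add b B)
  have "degree ([:-b, 1:] * root_poly B) = degree [:-b, 1:] + degree (root_poly B)"
    by (rule degree_mult_eq) (simp_all add: root_poly_nonzero)
  thus ?case by (simp add: root_poly_add_mset add)
qed

lemma poly_root_poly_eq_0: "poly (root_poly B) z = 0 \<longleftrightarrow> z \<in># (B :: 'b::idom multiset)"
  unfolding root_poly_def by (auto simp: poly_prod_mset image_iff)

lemma root_poly_coeffs_in_base_iff:
  fixes B :: "'a::field alg_closure multiset"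
  shows "(\<forall>i. in_base (coeff (root_poly B) i)) \<longleftrightarrow> (\<forall>i. in_base (coeff (esym_poly B) i))"
proof
  assume H: "\<forall>i. in_base (coeff (root_poly B) i)"
  show "\<forall>i. in_base (coeff (esym_poly B) i)"
    using H unfolding reflect_root_poly[symmetric] by (auto simp: coeff_reflect_poly)
next
  assume H: "\<forall>i. in_base (coeff (esym_poly B) i)"
  show "\<forall>i. in_base (coeff (root_poly B) i)"
  proof
    fix i
    show "in_base (coeff (root_poly B) i)"
    proof (cases "i \<le> degree (root_poly B)")
      case True
      have "coeff (esym_poly B) (degree (root_poly B) - i) = coeff (root_poly B) i"
        unfolding reflect_root_poly[symmetric] using True by (simp add: coeff_reflect_poly)
      thus ?thesis using H by metis
    next
      case False thus ?thesis by (simp add: coeff_eq_0)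
    qed
  qed
qed

lemma root_poly_coeffs_in_base_iff_power_sums:
  fixes B :: "'a::field_char_0 alg_closure multiset"
  shows "(\<forall>i. in_base (coeff (root_poly B) i)) \<longleftrightarrow> (\<forall>k. in_base (power_sum B k))"
  using root_poly_coeffs_in_base_iff power_sum_in_base esym_poly_coeff_in_base by blast

lemma roots_of_base_poly:
  fixes f :: "'a::field_char_0 poly"
  assumes "f \<noteq> 0"
  obtains A where "size A = degree f" "\<And>z. z \<in># A \<Longrightarrow> poly (map_poly to_ac f) z = 0"
    "\<And>k. in_base (power_sum A k)"
proof -
  define F where "F = map_poly to_ac f"
  have degF: "degree F = degree f" unfolding F_def by (rule degree_map_poly) simp
  have lcF: "lead_coeff F = to_ac (lead_coeff f)"
    unfolding F_def using degF by (simp add: coeff_map_poly F_def)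
  have F: "F \<noteq> 0" using assms lcF by (metis leading_coeff_0_iff to_ac_eq_0_iff)
  obtain A where sizeA: "size A = degree F" and fac: "F = smult (lead_coeff F) (root_poly A)"
    using alg_closed_imp_factorization[OF F] unfolding root_poly_def by blast
  have "root_poly A = smult (inverse (lead_coeff F)) F"
    using F by (subst fac) simp
  hence "\<forall>i. in_base (coeff (root_poly A) i)"
    by (auto simp: lcF F_def coeff_map_poly simp flip: to_ac_inverse to_ac_mult)
  hence "\<And>k. in_base (power_sum A k)" using root_poly_coeffs_in_base_iff_power_sums by blast
  moreover have "poly F z = 0" if "z \<in># A" for z
    using that by (subst fac) (simp add: poly_root_poly_eq_0)
  ultimately show ?thesis using that sizeA degF unfolding F_def by metis
qed

lemma base_poly_of_roots:
  fixes B :: "'a::field_char_0 alg_closure multiset"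
  assumes "\<And>k. in_base (power_sum B k)"
  obtains h :: "'a poly" where "degree h = size B" "map_poly to_ac h = root_poly B"
proof
  have coeffs: "\<forall>i. in_base (coeff (root_poly B) i)"
    using root_poly_coeffs_in_base_iff_power_sums assms by blast
  show hB: "map_poly to_ac (map_poly of_ac (root_poly B)) = root_poly B"
    by (rule poly_eqI) (simp add: coeff_map_poly to_ac_of_ac coeffs)
  have "degree (map_poly of_ac (root_poly B) :: 'a poly) = degree (root_poly B)"
    by (metis hB degree_map_poly to_ac_eq_0_iff)
  thus "degree (map_poly of_ac (root_poly B) :: 'a poly) = size B"
    by (simp add: degree_root_poly)
qed

lemma sum_mset_mset_nth: "(\<Sum>b\<in>#mset xs. f b) = (\<Sum>i<length xs. f (xs ! i))"
proof -
  have "(\<Sum>b\<in>#mset xs. f b) = sum_list (map f xs)"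
    by (simp flip: sum_mset_sum_list)
  also have "\<dots> = (\<Sum>i<length xs. f (xs ! i))"
    by (simp add: sum_list_sum_nth atLeast0LessThan)
  finally show ?thesis .
qed

definition index_pairs :: "nat \<Rightarrow> (nat \<times> nat) set" where
  "index_pairs n = {(i, j). i < j \<and> j < n}"

lemma finite_index_pairs [simp]: "finite (index_pairs n)"
  by (rule finite_subset[of _ "{..<n} \<times> {..<n}"]) (auto simp: index_pairs_def)

lemma index_pairs_Suc: "index_pairs (Suc n) = index_pairs n \<union> (\<lambda>i. (i, n)) ` {..<n}"
  by (auto simp: index_pairs_def less_Suc_eq)

lemma sum_square_symmetric:
  fixes g :: "nat \<Rightarrow> nat \<Rightarrow> 'b::comm_semiring_1"
  assumes sym: "\<And>i j. g i j = g j i"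
  shows "(\<Sum>i<n. \<Sum>j<n. g i j) = 2 * (\<Sum>(i, j)\<in>index_pairs n. g i j) + (\<Sum>i<n. g i i)"
proof (induction n)
  case 0 thus ?case by (simp add: index_pairs_def)
next
  case (Suc n)
  have disj: "index_pairs n \<inter> (\<lambda>i. (i, n)) ` {..<n} = {}"
    by (auto simp: index_pairs_def)
  have "(\<Sum>(i, j)\<in>index_pairs (Suc n). g i j)
        = (\<Sum>(i, j)\<in>index_pairs n. g i j) + (\<Sum>(i, j)\<in>(\<lambda>i. (i, n)) ` {..<n}. g i j)"
    unfolding index_pairs_Suc by (rule sum.union_disjoint) (use disj in auto)
  also have "(\<Sum>(i, j)\<in>(\<lambda>i. (i, n)) ` {..<n}. g i j) = (\<Sum>i<n. g i n)"
    by (subst sum.reindex) (auto simp: inj_on_def)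
  finally have P: "(\<Sum>(i, j)\<in>index_pairs (Suc n). g i j)
                   = (\<Sum>(i, j)\<in>index_pairs n. g i j) + (\<Sum>i<n. g i n)" .
  have "(\<Sum>i<Suc n. \<Sum>j<Suc n. g i j) = (\<Sum>i<n. \<Sum>j<n. g i j) + (\<Sum>i<n. g i n) + (\<Sum>j<n. g n j) + g n n"
    by (simp add: sum.distrib algebra_simps)
  also have "(\<Sum>j<n. g n j) = (\<Sum>i<n. g i n)" using sym by simp
  finally show ?case using Suc.IH P by (simp add: algebra_simps mult_2)
qed

lemma card_index_pairs: "2 * card (index_pairs n) = n * (n - 1)"
proof -
  have "(\<Sum>i<n. \<Sum>j<n. (1::nat)) = 2 * (\<Sum>(i, j)\<in>index_pairs n. (1::nat)) + (\<Sum>i<n. 1)"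
    by (rule sum_square_symmetric) simp
  hence "n * n = 2 * card (index_pairs n) + n" by simp
  thus ?thesis by (simp add: algebra_simps diff_mult_distrib2)
qed

lemma double_sum_in_base:
  fixes x :: "nat \<Rightarrow> 'a::field alg_closure"
  assumes "finite M" "\<And>l. l \<in> M \<Longrightarrow> in_base (\<alpha> l)" "\<And>m. in_base (\<Sum>i<n. x i ^ m)"
  shows "in_base (\<Sum>i<n. \<Sum>j<n. \<Sum>l\<in>M. \<alpha> l * x i ^ r l * x j ^ s l)"
proof -
  have "(\<Sum>i<n. \<Sum>j<n. \<Sum>l\<in>M. \<alpha> l * x i ^ r l * x j ^ s l) =
        (\<Sum>i<n. \<Sum>l\<in>M. \<Sum>j<n. \<alpha> l * x i ^ r l * x j ^ s l)"
    by (rule sum.cong[OF refl], rule sum.swap)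
  also have "\<dots> = (\<Sum>l\<in>M. \<Sum>i<n. \<Sum>j<n. \<alpha> l * x i ^ r l * x j ^ s l)"
    by (rule sum.swap)
  also have "\<dots> = (\<Sum>l\<in>M. \<alpha> l * ((\<Sum>i<n. x i ^ r l) * (\<Sum>j<n. x j ^ s l)))"
  proof (rule sum.cong[OF refl])
    fix l
    have "(\<Sum>i<n. x i ^ r l) * (\<Sum>j<n. x j ^ s l) = (\<Sum>i<n. \<Sum>j<n. x i ^ r l * x j ^ s l)"
      by (rule sum_product)
    thus "(\<Sum>i<n. \<Sum>j<n. \<alpha> l * x i ^ r l * x j ^ s l) = \<alpha> l * ((\<Sum>i<n. x i ^ r l) * (\<Sum>j<n. x j ^ s l))"
      by (simp add: sum_distrib_left mult.assoc)
  qed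
  also have "in_base \<dots>"
  proof (rule in_base_sum)
    fix l assume "l \<in> M"
    show "in_base (\<alpha> l * ((\<Sum>i<n. x i ^ r l) * (\<Sum>j<n. x j ^ s l)))"
      by (rule in_base_mult[OF assms(2)[OF \<open>l \<in> M\<close>] in_base_mult[OF assms(3) assms(3)]])
  qed
  finally show ?thesis .
qed

lemma diagonal_sum_in_base:
  fixes x :: "nat \<Rightarrow> 'a::field alg_closure"
  assumes "finite M" "\<And>l. l \<in> M \<Longrightarrow> in_base (\<alpha> l)" "\<And>m. in_base (\<Sum>i<n. x i ^ m)"
  shows "in_base (\<Sum>i<n. \<Sum>l\<in>M. \<alpha> l * x i ^ r l * x i ^ s l)"
proof -
  have "(\<Sum>i<n. \<Sum>l\<in>M. \<alpha> l * x i ^ r l * x i ^ s l) = (\<Sum>l\<in>M. \<Sum>i<n. \<alpha> l * x i ^ (r l + s l))"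
    by (subst sum.swap) (simp add: power_add mult.assoc)
  also have "\<dots> = (\<Sum>l\<in>M. \<alpha> l * (\<Sum>i<n. x i ^ (r l + s l)))"
    by (simp add: sum_distrib_left)
  also have "in_base \<dots>"
  proof (rule in_base_sum)
    fix l assume "l \<in> M"
    show "in_base (\<alpha> l * (\<Sum>i<n. x i ^ (r l + s l)))"
      by (rule in_base_mult[OF assms(2)[OF \<open>l \<in> M\<close>] assms(3)])
  qed
  finally show ?thesis .
qed

lemma power_add_add_mult:
  fixes a b c :: "'b::comm_ring_1"
  shows "(a + b + c * a * b) ^ k =
    (\<Sum>l\<in>Sigma {..k} (\<lambda>t. {..k - t}). (of_nat (k choose fst l) * of_nat ((k - fst l) choose snd l) * c ^ fst l)
         * a ^ (fst l + snd l) * b ^ (fst l + (k - fst l - snd l)))"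
proof -
  have "(a + b + c * a * b) ^ k = (\<Sum>t\<le>k. of_nat (k choose t) * (c * a * b) ^ t * (a + b) ^ (k - t))"
    using binomial_ring[of "c * a * b" "a + b" k] by (simp add: add.commute)
  also have "\<dots> = (\<Sum>t\<le>k. \<Sum>u\<le>k - t. (of_nat (k choose t) * of_nat ((k - t) choose u) * c ^ t)
         * a ^ (t + u) * b ^ (t + (k - t - u)))"
  proof (rule sum.cong[OF refl])
    fix t
    have "(a + b) ^ (k - t) = (\<Sum>u\<le>k - t. of_nat ((k - t) choose u) * a ^ u * b ^ (k - t - u))"
      by (rule binomial_ring)
    thus "of_nat (k choose t) * (c * a * b) ^ t * (a + b) ^ (k - t) = (\<Sum>u\<le>k - t.
        (of_nat (k choose t) * of_nat ((k - t) choose u) * c ^ t) * a ^ (t + u) * b ^ (t + (k - t - u)))"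
      by (simp add: sum_distrib_left power_mult_distrib power_add algebra_simps)
  qed
  also have "\<dots> = (\<Sum>l\<in>Sigma {..k} (\<lambda>t. {..k - t}). (of_nat (k choose fst l) * of_nat ((k - fst l) choose snd l)
         * c ^ fst l) * a ^ (fst l + snd l) * b ^ (fst l + (k - fst l - snd l)))"
    by (subst sum.Sigma) (auto simp: case_prod_beta)
  finally show ?thesis .
qed

lemma pair_power_sum_in_base:
  fixes x :: "nat \<Rightarrow> 'a::field_char_0 alg_closure"
  assumes psx: "\<And>k. in_base (\<Sum>i<n. x i ^ k)" and c: "in_base c"
  shows "in_base (\<Sum>(i, j)\<in>index_pairs n. (x i + x j + c * x i * x j) ^ k)"
proof -
  define z where "z i j = x i + x j + c * x i * x j" for i j
  define \<alpha> where "\<alpha> l = of_nat (k choose fst l) * of_nat ((k - fst l) choose snd l) * c ^ fst l" for l :: "nat \<times> nat"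
  define r where "r l = fst l + snd l" for l :: "nat \<times> nat"
  define s where "s l = fst l + (k - fst l - snd l)" for l :: "nat \<times> nat"
  have zk: "z i j ^ k = (\<Sum>l\<in>Sigma {..k} (\<lambda>t. {..k - t}). \<alpha> l * x i ^ r l * x j ^ s l)" for i j
    unfolding z_def \<alpha>_def r_def s_def by (rule power_add_add_mult)
  have \<alpha>: "in_base (\<alpha> l)" for l
    unfolding \<alpha>_def using c by (intro in_base_mult in_base_power) auto
  have full: "in_base (\<Sum>i<n. \<Sum>j<n. z i j ^ k)"
    unfolding zk by (rule double_sum_in_base) (auto simp: \<alpha> psx)
  have diagonal: "in_base (\<Sum>i<n. z i i ^ k)"
    unfolding zk by (rule diagonal_sum_in_base) (auto simp: \<alpha> psx)
  have "(\<Sum>i<n. \<Sum>j<n. z i j ^ k) = 2 * (\<Sum>(i, j)\<in>index_pairs n. z i j ^ k) + (\<Sum>i<n. z i i ^ k)"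
    by (rule sum_square_symmetric) (simp add: z_def algebra_simps)
  hence "(\<Sum>(i, j)\<in>index_pairs n. z i j ^ k) = ((\<Sum>i<n. \<Sum>j<n. z i j ^ k) - (\<Sum>i<n. z i i ^ k)) / 2"
    by simp
  also have "in_base \<dots>" using full diagonal by blast
  finally show ?thesis unfolding z_def .
qed

lemma nat_choice_collision:
  assumes "finite P" and "\<And>k::nat. \<exists>p\<in>P. Q k p"
  obtains k1 k2 p where "k1 \<noteq> k2" "p \<in> P" "Q k1 p" "Q k2 p"
proof -
  define g where "g k = (SOME p. p \<in> P \<and> Q k p)" for k
  have g: "g k \<in> P \<and> Q k (g k)" for k
    unfolding g_def by (rule someI_ex) (use assms(2) in blast)
  have "\<not> inj g"
  proof
    assume "inj g"
    moreover have "finite (range g)" using g assms(1) by (meson finite_subset image_subsetI)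
    ultimately show False using finite_imageD[of g UNIV] by simp
  qed
  then obtain k1 k2 where "k1 \<noteq> k2" "g k1 = g k2" unfolding inj_def by blast
  thus ?thesis using g that by metis
qed

text \<open>Laplace's argument: if the degree is \<open>2 ^ (e + 1) * m\<close>, then for every \<open>c\<close> the roots
  \<open>x\<^sub>i + x\<^sub>j + c x\<^sub>i x\<^sub>j\<close> (\<open>i < j\<close>) of \<open>f\<close> are the roots of a real polynomial of degree \<open>2 ^ e * m'\<close> with
  \<open>m'\<close> odd, so one of them lies in R[i]; two values of \<open>c\<close> give the same pair, which puts
  \<open>x\<^sub>i + x\<^sub>j\<close> and \<open>x\<^sub>i x\<^sub>j\<close>, hence \<open>x\<^sub>i\<close>, into R[i].\<close>

lemma laplace_step:
  fixes f :: "'a::real_closed_field poly"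
  assumes IH: "\<And>g::'a poly. \<And>m. degree g = 2 ^ e * m \<Longrightarrow> odd m \<Longrightarrow>
                  \<exists>z. in_Ri z \<and> poly (map_poly to_ac g) z = 0"
    and deg: "degree f = 2 ^ Suc e * m" and m: "odd m"
  shows "\<exists>z. in_Ri z \<and> poly (map_poly to_ac f) z = 0"
proof -
  define n where "n = degree f"
  have n: "0 < n" "even n" using deg m unfolding n_def by (auto intro: odd_pos)
  hence "f \<noteq> 0" unfolding n_def by auto
  then obtain A where sizeA: "size A = n" and rootA: "\<And>z. z \<in># A \<Longrightarrow> poly (map_poly to_ac f) z = 0"
    and psA: "\<And>k. in_base (power_sum A k)"
    using roots_of_base_poly unfolding n_def by metis
  obtain xs where xs: "mset xs = A" using ex_mset by blast
  define x where "x i = xs ! i" for i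
  have length_xs: "length xs = n" using sizeA xs by (metis size_mset)
  have psx: "in_base (\<Sum>i<n. x i ^ k)" for k
    using psA[of k]
    unfolding power_sum_def x_def by (simp add: sum_mset_mset_nth flip: xs length_xs)
  define z where "z c i j = x i + x j + of_nat c * x i * x j" for c :: nat and i j
  have pair_root: "\<exists>p\<in>index_pairs n. in_Ri (z c (fst p) (snd p))" for c
  proof -
    define B where "B = image_mset (\<lambda>(i, j). z c i j) (mset_set (index_pairs n))"
    have "power_sum B k = (\<Sum>(i, j)\<in>index_pairs n. z c i j ^ k)" for k
      by (simp add: power_sum_def B_def multiset.map_comp sum_unfold_sum_mset case_prod_beta comp_def)
    hence "in_base (power_sum B k)" for k
      unfolding z_def by (simp only: pair_power_sum_in_base[OF psx in_base_of_nat])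
    then obtain h :: "'a poly" where h: "degree h = size B" "map_poly to_ac h = root_poly B"
      by (rule base_poly_of_roots)
    have "2 * size B = 2 * (2 ^ e * (m * (n - 1)))"
      using card_index_pairs[of n] deg unfolding B_def n_def by simp
    moreover have "odd (m * (n - 1))" using m n by simp
    ultimately obtain w where "in_Ri w" "poly (root_poly B) w = 0"
      using IH[of h "m * (n - 1)"] h by auto
    thus ?thesis unfolding poly_root_poly_eq_0 B_def by (auto simp: case_prod_beta)
  qed
  obtain c1 c2 p where c12: "c1 \<noteq> c2" and p: "p \<in> index_pairs n"
    and z1: "in_Ri (z c1 (fst p) (snd p))" and z2: "in_Ri (z c2 (fst p) (snd p))"
    by (rule nat_choice_collision[of "index_pairs n" "\<lambda>c p. in_Ri (z c (fst p) (snd p))"])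
      (use pair_root in auto)
  define a where "a = x (fst p)"
  define b where "b = x (snd p)"
  have "a * b = (z c1 (fst p) (snd p) - z c2 (fst p) (snd p)) / (of_nat c1 - of_nat c2)"
    using c12 by (simp add: z_def a_def b_def field_simps)
  hence ab: "in_Ri (a * b)" using z1 z2 by (metis in_Ri_diff in_Ri_divide in_Ri_to_ac to_ac_of_nat)
  have "a + b = z c1 (fst p) (snd p) - of_nat c1 * (a * b)"
    by (simp add: z_def a_def b_def algebra_simps)
  hence "in_Ri (a + b)" using z1 ab by (metis in_Ri_diff in_Ri_mult in_Ri_to_ac to_ac_of_nat)
  hence "in_Ri a" using ab by (rule in_Ri_of_sum_mult)
  moreover have "a \<in># A"
    using p length_xs unfolding a_def x_def index_pairs_def by (auto simp flip: xs)
  ultimately show ?thesis using rootA by blast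
qed

lemma exists_two_power_odd: "0 < (n::nat) \<Longrightarrow> \<exists>e m. n = 2 ^ e * m \<and> odd m"
proof (induction n rule: less_induct)
  case (less n)
  show ?case
  proof (cases "odd n")
    case True thus ?thesis by (intro exI[of _ 0] exI[of _ n]) simp
  next
    case False
    then obtain n' where n': "n = 2 * n'" by (metis evenE)
    with less.prems have "n' < n" "0 < n'" by auto
    then obtain e m where "n' = 2 ^ e * m" "odd m" using less.IH by blast
    thus ?thesis using n' by (intro exI[of _ "Suc e"] exI[of _ m]) simp
  qed
qed

lemma odd_degree_root:
  fixes f :: "'a::real_closed_field poly"
  assumes "odd (degree f)"
  shows "\<exists>x. poly f x = 0"
proof -
  have "f \<noteq> 0" using assms by (metis degree_0 odd_pos less_numeral_extra(3))
  hence "coeff f (degree f) \<noteq> 0" by simp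
  then obtain x where "(\<Sum>i\<le>degree f. coeff f i * x ^ i) = 0"
    using rcf_odd_root[OF assms] by blast
  thus ?thesis by (metis poly_altdef)
qed

theorem real_poly_root_in_Ri:
  fixes f :: "'a::real_closed_field poly"
  assumes "0 < degree f"
  shows "\<exists>z. in_Ri z \<and> poly (map_poly to_ac f) z = 0"
proof -
  have "\<forall>f::'a poly. \<forall>m. degree f = 2 ^ e * m \<longrightarrow> odd m \<longrightarrow> (\<exists>z. in_Ri z \<and> poly (map_poly to_ac f) z = 0)" for e
  proof (induction e)
    case 0
    show ?case
    proof (intro allI impI)
      fix f :: "'a poly" and m assume "degree f = 2 ^ 0 * m" "odd m"
      then obtain x where "poly f x = 0" using odd_degree_root by auto
      thus "\<exists>z. in_Ri z \<and> poly (map_poly to_ac f) z = 0"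
        by (intro exI[of _ "to_ac x"]) (simp add: poly_map_poly_to_ac)
    qed
  next
    case (Suc e)
    show ?case using laplace_step[of e] Suc.IH by blast
  qed
  moreover obtain e m where "degree f = 2 ^ e * m" "odd m"
    using exists_two_power_odd[OF assms] by blast
  ultimately show ?thesis by blast
qed

lemma poly_quadratic_root_ac_i:
  fixes a b :: "'a::field"
  shows "poly (map_poly to_ac [:a * a + b * b, - 2 * a, 1:]) (to_ac a + to_ac b * ac_i) = 0"
proof -
  define z where "z = to_ac a + to_ac b * ac_i"
  have zz: "z * z = to_ac (a * a - b * b) + to_ac (a * b + b * a) * ac_i"
    unfolding z_def by (rule ac_i_mult_formula)
  have "poly (map_poly to_ac [:a * a + b * b, - 2 * a, 1:]) z =
        to_ac (a * a + b * b) + to_ac (- 2 * a) * z + z * z"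
    by (simp add: map_poly_pCons algebra_simps)
  also have "\<dots> = to_ac (a * a + b * b + (- 2 * a) * a + (a * a - b * b)) +
                   to_ac ((- 2 * a) * b + (a * b + b * a)) * ac_i"
    unfolding zz by (simp add: z_def algebra_simps)
  also have "\<dots> = 0" by (simp add: algebra_simps)
  finally show ?thesis unfolding z_def .
qed

lemma quadratic_dvd_of_root_ac_i:
  fixes p :: "'a::linordered_field poly"
  assumes root: "poly (map_poly to_ac p) (to_ac a + to_ac b * ac_i) = 0" and b: "b \<noteq> 0"
  shows "[:a * a + b * b, - 2 * a, 1:] dvd p"
proof -
  define q where "q = [:a * a + b * b, - 2 * a, 1:]"
  define r where "r = p mod q"
  have "r = 0 \<or> degree r < 2" using degree_mod_less[of q p] by (auto simp: r_def q_def)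
  hence "r = [:coeff r 0, coeff r 1:]"
    by (intro poly_eqI) (auto simp: coeff_pCons coeff_eq_0 split: nat.splits)
  then obtain r0 r1 where r01: "r = [:r0, r1:]" by blast
  have "map_poly to_ac p = map_poly to_ac (p div q) * map_poly to_ac q + map_poly to_ac r"
    unfolding r_def by (simp flip: map_poly_to_ac_add map_poly_to_ac_mult)
  hence "poly (map_poly to_ac r) (to_ac a + to_ac b * ac_i) = 0"
    using root poly_quadratic_root_ac_i[of a b] by (simp add: q_def)
  moreover have "poly (map_poly to_ac r) (to_ac a + to_ac b * ac_i) = to_ac (r0 + r1 * a) + to_ac (r1 * b) * ac_i"
    by (simp add: r01 map_poly_pCons algebra_simps)
  ultimately have "r0 + r1 * a = 0 \<and> r1 * b = 0" using ac_i_independent by metis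
  hence "r = 0" using b r01 by auto
  thus ?thesis unfolding q_def r_def by (simp add: mod_eq_0_iff_dvd)
qed

lemma real_poly_small_factor:
  fixes p :: "'a::real_closed_field poly"
  assumes "0 < degree p"
  obtains a q where "p = [:-a, 1:] * q"
  | f q where "p = f * q" "degree f = 2" "\<And>x. poly f x > 0"
proof -
  obtain z where z: "in_Ri z" "poly (map_poly to_ac p) z = 0"
    using real_poly_root_in_Ri[OF assms] by blast
  then obtain a b where zab: "z = to_ac a + to_ac b * ac_i" unfolding in_Ri_def by blast
  show ?thesis
  proof (cases "b = 0")
    case True
    hence "poly p a = 0" using z zab by (simp add: poly_map_poly_to_ac)
    thus ?thesis using that(1) poly_eq_0_iff_dvd by (metis dvdE)
  next
    case False
    define f where "f = [:a * a + b * b, - 2 * a, 1:]"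
    have "f dvd p" unfolding f_def using z zab False by (intro quadratic_dvd_of_root_ac_i) auto
    moreover have "poly f x > 0" for x
    proof -
      have "poly f x = (x - a) * (x - a) + b * b" by (simp add: f_def algebra_simps)
      moreover have "b * b > 0" using False by (metis mult_neg_neg mult_pos_pos linorder_neqE)
      ultimately show ?thesis by (metis add_nonneg_pos zero_le_square)
    qed
    moreover have "degree f = 2" by (simp add: f_def)
    ultimately show ?thesis using that(2) by (metis dvdE mult.commute)
  qed
qed

theorem poly_sgn_eq_no_root:
  fixes p :: "'a::real_closed_field poly"
  assumes "u \<le> v" "\<And>x. u \<le> x \<Longrightarrow> x \<le> v \<Longrightarrow> poly p x \<noteq> 0"
  shows "sgn (poly p u) = sgn (poly p v)"
  using assms(2)
proof (induction "degree p" arbitrary: p rule: less_induct)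
  case (less p)
  show ?case
  proof (cases "degree p = 0")
    case True
    then obtain c where "p = [:c:]" by (metis degree_eq_zeroE)
    thus ?thesis by simp
  next
    case False
    hence "p \<noteq> 0" by auto
    show ?thesis
    proof (rule real_poly_small_factor[of p])
      show "0 < degree p" using False by simp
    next
      fix a q assume linear: "p = [:-a, 1:] * q"
      have "q \<noteq> 0" using \<open>p \<noteq> 0\<close> linear by auto
      hence "degree q < degree p" unfolding linear by (subst degree_mult_eq) auto
      moreover have "poly q x \<noteq> 0" if "u \<le> x" "x \<le> v" for x
        using less.prems[OF that] linear by simp
      ultimately have "sgn (poly q u) = sgn (poly q v)" by (rule less.hyps)
      moreover have "poly p a = 0" by (simp add: linear)
      hence "a < u \<or> v < a" using less.prems by (meson not_le)
      hence "sgn (u - a) = sgn (v - a)" using assms(1) by auto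
      moreover have "poly p x = (x - a) * poly q x" for x by (simp add: linear algebra_simps)
      ultimately show ?thesis by (simp only: sgn_mult)
    next
      fix f q assume quadratic: "p = f * q" "degree f = 2" "\<And>x. poly f x > 0"
      have "q \<noteq> 0" using \<open>p \<noteq> 0\<close> quadratic(1) by auto
      moreover have "f \<noteq> 0" using quadratic(2) by auto
      ultimately have "degree q < degree p"
        unfolding quadratic(1) using quadratic(2) by (subst degree_mult_eq) auto
      moreover have "poly q x \<noteq> 0" if "u \<le> x" "x \<le> v" for x
        using less.prems[OF that] quadratic(1) by simp
      ultimately have "sgn (poly q u) = sgn (poly q v)" by (rule less.hyps)
      thus ?thesis using quadratic(3)[of u] quadratic(3)[of v] by (simp add: quadratic(1) sgn_mult)
    qed
  qed
qed

section \<open>The field \<open>C = R[i]\<close>\<close>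

lemma Re_c_0 [simp]: "Re_c 0 = 0" and Im_c_0 [simp]: "Im_c 0 = 0"
  by (simp_all add: zero_cpx_def)
lemma Re_c_1 [simp]: "Re_c 1 = 1" and Im_c_1 [simp]: "Im_c 1 = 0"
  by (simp_all add: one_cpx_def)
lemma Re_c_add [simp]: "Re_c (x + y) = Re_c x + Re_c y" and Im_c_add [simp]: "Im_c (x + y) = Im_c x + Im_c y"
  by (simp_all add: plus_cpx_def)
lemma Re_c_diff [simp]: "Re_c (x - y) = Re_c x - Re_c y" and Im_c_diff [simp]: "Im_c (x - y) = Im_c x - Im_c y"
  by (simp_all add: minus_cpx_def)
lemma Re_c_uminus [simp]: "Re_c (- x) = - Re_c x" and Im_c_uminus [simp]: "Im_c (- x) = - Im_c x"
  by (simp_all add: uminus_cpx_def)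
lemma Re_c_mult [simp]: "Re_c (x * y) = Re_c x * Re_c y - Im_c x * Im_c y"
  and Im_c_mult [simp]: "Im_c (x * y) = Re_c x * Im_c y + Im_c x * Re_c y"
  by (simp_all add: times_cpx_def)
lemma Re_c_ii [simp]: "Re_c ii = 0" and Im_c_ii [simp]: "Im_c ii = 1"
  by (simp_all add: ii_def)
lemma Re_c_cnj [simp]: "Re_c (cnj z) = Re_c z" and Im_c_cnj [simp]: "Im_c (cnj z) = - Im_c z"
  by (simp_all add: cnj_def)

lemma Re_c_sum: "Re_c (sum f A) = (\<Sum>x\<in>A. Re_c (f x))"
  by (induction A rule: infinite_finite_induct) simp_all
lemma Im_c_sum: "Im_c (sum f A) = (\<Sum>x\<in>A. Im_c (f x))"
  by (induction A rule: infinite_finite_induct) simp_all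

lemma cpx_eq_iff: "x = y \<longleftrightarrow> Re_c x = Re_c y \<and> Im_c x = Im_c y"
  using cpx_eqI by blast

lemma cpx_eq_0_iff: "x = 0 \<longleftrightarrow> Re_c x = 0 \<and> Im_c x = 0"
  by (simp add: cpx_eq_iff)

lemma ii_nonzero [simp]: "ii \<noteq> (0 :: 'a::comm_ring_1 cpx)"
  by (simp add: cpx_eq_0_iff)

lemma cnj_mult: "cnj (x * y) = cnj x * cnj (y :: 'a::comm_ring_1 cpx)"
  by (simp add: cpx_eq_iff)
lemma cnj_add: "cnj (x + y) = cnj x + cnj (y :: 'a::comm_ring_1 cpx)"
  by (simp add: cpx_eq_iff)
lemma cnj_0 [simp]: "cnj 0 = (0 :: 'a::comm_ring_1 cpx)"
  by (simp add: cpx_eq_iff)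
lemma cnj_1 [simp]: "cnj 1 = (1 :: 'a::comm_ring_1 cpx)"
  by (simp add: cpx_eq_iff)
lemma cnj_ii: "cnj ii = - (ii :: 'a::comm_ring_1 cpx)"
  by (simp add: cpx_eq_iff)

lemma Re_c_neg_one_power [simp]: "Re_c ((-1) ^ k * w) = (-1) ^ k * Re_c (w :: 'a::comm_ring_1 cpx)"
  by (induction k) simp_all
lemma Im_c_neg_one_power [simp]: "Im_c ((-1) ^ k * w) = (-1) ^ k * Im_c (w :: 'a::comm_ring_1 cpx)"
  by (induction k) simp_all

instantiation cpx :: (linordered_field) field
begin

definition inverse_cpx :: "'a cpx \<Rightarrow> 'a cpx" where
  "inverse_cpx x = (let n = Re_c x * Re_c x + Im_c x * Im_c x in Cpx (Re_c x / n) (- Im_c x / n))"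

definition divide_cpx :: "'a cpx \<Rightarrow> 'a cpx \<Rightarrow> 'a cpx" where
  "divide_cpx x y = x * inverse y"

instance
proof
  fix x :: "'a cpx"
  assume "x \<noteq> 0"
  hence "Re_c x \<noteq> 0 \<or> Im_c x \<noteq> 0" by (simp add: cpx_eq_0_iff)
  hence "Re_c x * Re_c x + Im_c x * Im_c x \<noteq> 0"
    by (metis add_nonneg_eq_0_iff mult_eq_0_iff zero_le_square)
  thus "inverse x * x = 1"
    by (simp add: cpx_eq_iff inverse_cpx_def Let_def diff_divide_distrib[symmetric]
        add_divide_distrib[symmetric] algebra_simps)
qed (simp_all add: divide_cpx_def inverse_cpx_def cpx_eq_iff)

end

section \<open>Real and imaginary parts of complex polynomials\<close>

definition Re_poly :: "'a::comm_ring_1 cpx poly \<Rightarrow> 'a poly" where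
  "Re_poly A = map_poly Re_c A"

definition Im_poly :: "'a::comm_ring_1 cpx poly \<Rightarrow> 'a poly" where
  "Im_poly A = map_poly Im_c A"

definition cpx_of :: "'a::comm_ring_1 \<Rightarrow> 'a cpx" where
  "cpx_of r = Cpx r 0"

lemma coeff_Re_poly [simp]: "coeff (Re_poly A) i = Re_c (coeff A i)"
  by (simp add: Re_poly_def coeff_map_poly)
lemma coeff_Im_poly [simp]: "coeff (Im_poly A) i = Im_c (coeff A i)"
  by (simp add: Im_poly_def coeff_map_poly)

lemma Re_poly_add [simp]: "Re_poly (A + B) = Re_poly A + Re_poly B" by (rule poly_eqI) simp
lemma Im_poly_add [simp]: "Im_poly (A + B) = Im_poly A + Im_poly B" by (rule poly_eqI) simp
lemma Re_poly_uminus [simp]: "Re_poly (- A) = - Re_poly A" by (rule poly_eqI) simp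
lemma Im_poly_uminus [simp]: "Im_poly (- A) = - Im_poly A" by (rule poly_eqI) simp
lemma Re_poly_0 [simp]: "Re_poly 0 = 0" by (rule poly_eqI) simp
lemma Im_poly_0 [simp]: "Im_poly 0 = 0" by (rule poly_eqI) simp

lemma Re_poly_pCons [simp]: "Re_poly (pCons a A) = pCons (Re_c a) (Re_poly A)"
  by (rule poly_eqI) (simp add: coeff_pCons split: nat.splits)
lemma Im_poly_pCons [simp]: "Im_poly (pCons a A) = pCons (Im_c a) (Im_poly A)"
  by (rule poly_eqI) (simp add: coeff_pCons split: nat.splits)
lemma Re_poly_smult [simp]: "Re_poly (smult c A) = smult (Re_c c) (Re_poly A) - smult (Im_c c) (Im_poly A)"
  by (rule poly_eqI) simp
lemma Im_poly_smult [simp]: "Im_poly (smult c A) = smult (Re_c c) (Im_poly A) + smult (Im_c c) (Re_poly A)"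
  by (rule poly_eqI) (simp add: algebra_simps)

lemma Re_poly_mult: "Re_poly (A * B) = Re_poly A * Re_poly B - Im_poly A * Im_poly B"
  by (rule poly_eqI) (simp add: coeff_mult Re_c_sum sum_subtractf)
lemma Im_poly_mult: "Im_poly (A * B) = Re_poly A * Im_poly B + Im_poly A * Re_poly B"
  by (rule poly_eqI) (simp add: coeff_mult Im_c_sum sum.distrib)

lemma Re_poly_smult_ii: "Re_poly (smult ii A) = - Im_poly A" by (rule poly_eqI) simp
lemma Im_poly_smult_ii: "Im_poly (smult ii A) = Re_poly A" by (rule poly_eqI) simp

lemma cpx_poly_eq_0_iff: "A = 0 \<longleftrightarrow> Re_poly A = 0 \<and> Im_poly A = 0"
proof
  assume "Re_poly A = 0 \<and> Im_poly A = 0"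
  hence "\<forall>i. Re_c (coeff A i) = 0 \<and> Im_c (coeff A i) = 0"
    by (metis coeff_Im_poly coeff_Re_poly coeff_0)
  thus "A = 0" by (intro poly_eqI) (simp add: cpx_eq_0_iff)
qed simp

lemma Re_c_cpx_of [simp]: "Re_c (cpx_of r) = r" and Im_c_cpx_of [simp]: "Im_c (cpx_of r) = 0"
  by (simp_all add: cpx_of_def)

lemma Re_c_poly: "Re_c (poly A (cpx_of t)) = poly (Re_poly A) t"
  by (induction A) (simp_all add: Re_poly_def map_poly_pCons)
lemma Im_c_poly: "Im_c (poly A (cpx_of t)) = poly (Im_poly A) t"
  by (induction A) (simp_all add: Im_poly_def map_poly_pCons)

definition translate :: "'a::comm_ring_1 cpx poly \<Rightarrow> 'a \<Rightarrow> 'a cpx poly" where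
  "translate A x = pcompose A [:cpx_of x, 1:]"

lemma Re_poly_translate: "Re_poly (translate A x) = pcompose (Re_poly A) [:x, 1:]"
  unfolding translate_def
proof (induction A)
  case 0 thus ?case by simp
next
  case (pCons a A)
  have "Re_poly (pcompose (pCons a A) [:cpx_of x, 1:])
        = Re_poly ([:a:] + [:cpx_of x, 1:] * pcompose A [:cpx_of x, 1:])"
    by (simp add: pcompose_pCons)
  also have "\<dots> = [:Re_c a:] + [:x, 1:] * pcompose (Re_poly A) [:x, 1:]"
    by (simp add: Re_poly_mult pCons)
  also have "\<dots> = pcompose (Re_poly (pCons a A)) [:x, 1:]"
    by (simp add: Re_poly_def map_poly_pCons pcompose_pCons)
  finally show ?case .
qed

lemma Im_poly_translate: "Im_poly (translate A x) = pcompose (Im_poly A) [:x, 1:]"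
  unfolding translate_def
proof (induction A)
  case 0 thus ?case by simp
next
  case (pCons a A)
  have "Im_poly (pcompose (pCons a A) [:cpx_of x, 1:])
        = Im_poly ([:a:] + [:cpx_of x, 1:] * pcompose A [:cpx_of x, 1:])"
    by (simp add: pcompose_pCons)
  also have "\<dots> = [:Im_c a:] + [:x, 1:] * pcompose (Im_poly A) [:x, 1:]"
    by (simp add: Im_poly_mult pCons Re_poly_translate[unfolded translate_def])
  also have "\<dots> = pcompose (Im_poly (pCons a A)) [:x, 1:]"
    by (simp add: Im_poly_def map_poly_pCons pcompose_pCons)
  finally show ?case .
qed

lemma translate_mult: "translate (A * B) x = translate A x * translate B x"
  by (simp add: translate_def pcompose_mult)

lemma translate_eq_0_iff: "translate A x = 0 \<longleftrightarrow> A = (0 :: 'a::linordered_field cpx poly)"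
  by (simp add: translate_def pcompose_eq_0_iff)

definition trailing_degree :: "'b::zero poly \<Rightarrow> nat" where
  "trailing_degree C = (LEAST i. coeff C i \<noteq> 0)"

definition trailing_coeff :: "'b::zero poly \<Rightarrow> 'b" where
  "trailing_coeff C = coeff C (trailing_degree C)"

lemma trailing_coeff_nonzero: "C \<noteq> 0 \<Longrightarrow> trailing_coeff C \<noteq> 0"
  unfolding trailing_coeff_def trailing_degree_def by (rule LeastI_ex) (metis leading_coeff_neq_0)

lemma coeff_below_trailing_degree: "i < trailing_degree C \<Longrightarrow> coeff C i = 0"
  unfolding trailing_degree_def using not_less_Least by blast

lemma trailing_degree_eqI: "coeff C k \<noteq> 0 \<Longrightarrow> (\<And>i. i < k \<Longrightarrow> coeff C i = 0) \<Longrightarrow> trailing_degree C = k"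
  unfolding trailing_degree_def by (rule Least_equality) (auto simp: not_less[symmetric])

lemma trailing_mult:
  fixes C D :: "'b::idom poly"
  assumes "C \<noteq> 0" "D \<noteq> 0"
  shows "trailing_degree (C * D) = trailing_degree C + trailing_degree D
     \<and> trailing_coeff (C * D) = trailing_coeff C * trailing_coeff D"
proof -
  define m where "m = trailing_degree C"
  define n where "n = trailing_degree D"
  have cm: "coeff C i = 0" if "i < m" for i using that coeff_below_trailing_degree m_def by blast
  have dn: "coeff D i = 0" if "i < n" for i using that coeff_below_trailing_degree n_def by blast
  have top: "coeff (C * D) (m + n) = coeff C m * coeff D n"
  proof -
    have "coeff (C * D) (m + n) = (\<Sum>i\<le>m + n. coeff C i * coeff D (m + n - i))"
      by (rule coeff_mult)
    also have "\<dots> = coeff C m * coeff D (m + n - m) + (\<Sum>i\<in>{..m + n} - {m}. coeff C i * coeff D (m + n - i))"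
      by (subst sum.remove[of _ m]) auto
    also have "(\<Sum>i\<in>{..m + n} - {m}. coeff C i * coeff D (m + n - i)) = 0"
    proof (rule sum.neutral, rule ballI)
      fix i assume "i \<in> {..m + n} - {m}"
      hence "i < m \<or> m + n - i < n" by auto
      thus "coeff C i * coeff D (m + n - i) = 0" using cm dn by auto
    qed
    finally show ?thesis by simp
  qed
  have low: "coeff (C * D) k = 0" if "k < m + n" for k
  proof -
    have "coeff (C * D) k = (\<Sum>i\<le>k. coeff C i * coeff D (k - i))" by (rule coeff_mult)
    also have "\<dots> = 0"
    proof (rule sum.neutral, rule ballI)
      fix i assume "i \<in> {..k}"
      hence "i < m \<or> k - i < n" using that by auto
      thus "coeff C i * coeff D (k - i) = 0" using cm dn by auto
    qed
    finally show ?thesis .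
  qed
  have nz: "coeff C m * coeff D n \<noteq> 0"
    using trailing_coeff_nonzero[OF assms(1)] trailing_coeff_nonzero[OF assms(2)]
    by (simp add: trailing_coeff_def m_def n_def)
  have o: "trailing_degree (C * D) = m + n" by (rule trailing_degree_eqI) (use top nz low in auto)
  thus ?thesis using top by (simp add: trailing_coeff_def m_def n_def)
qed

lemma pcompose_power_left: "pcompose (p ^ n) q = (pcompose p q) ^ (n::nat)"
  for p q :: "'b::comm_semiring_1 poly"
proof (induction n)
  case 0 show ?case by (metis one_pCons pcompose_const power_0)
qed (simp add: pcompose_mult)

lemma coeff_xpow_mult: "coeff ([:0, 1:] ^ m * R) i = (if i < m then 0 else coeff R (i - m))"
  using coeff_monom_mult[of 1 m R i] by (simp add: monom_altdef)

lemma order_cof_decomp: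
  fixes P :: "'a::linordered_field poly"
  assumes "P \<noteq> 0"
  shows "P = [:-x, 1:] ^ order x P * cof_at x P" and "poly (cof_at x P) x \<noteq> 0"
proof -
  show P: "P = [:-x, 1:] ^ order x P * cof_at x P"
    unfolding cof_at_def mult_at_def using order_1[of x P] by (rule dvd_mult_div_cancel[symmetric])
  show "poly (cof_at x P) x \<noteq> 0"
  proof
    assume "poly (cof_at x P) x = 0"
    then obtain R where R: "cof_at x P = [:-x, 1:] * R" using poly_eq_0_iff_dvd by (metis dvdE)
    have "P = [:-x, 1:] ^ order x P * ([:-x, 1:] * R)" using P R by metis
    hence "P = [:-x, 1:] ^ Suc (order x P) * R" by (simp only: power_Suc2 mult.assoc)
    hence "[:-x, 1:] ^ Suc (order x P) dvd P" by (rule dvdI)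
    thus False using order_2[OF assms] by blast
  qed
qed

lemma coeff_pcompose_shift_order:
  fixes P :: "'a::linordered_field poly"
  assumes "P \<noteq> 0"
  shows "i < order x P \<Longrightarrow> coeff (pcompose P [:x, 1:]) i = 0"
    and "coeff (pcompose P [:x, 1:]) (order x P) = poly (cof_at x P) x"
proof -
  have lin: "pcompose [:-x, 1:] [:x, 1:] = [:0, 1:]" by (simp add: pcompose_pCons)
  have "pcompose P [:x, 1:] = pcompose ([:-x, 1:] ^ order x P) [:x, 1:] * pcompose (cof_at x P) [:x, 1:]"
    by (subst order_cof_decomp(1)[OF assms]) (simp only: pcompose_mult)
  also have "pcompose ([:-x, 1:] ^ order x P) [:x, 1:] = [:0, 1:] ^ order x P"
    by (simp only: pcompose_power_left lin)
  finally have e: "pcompose P [:x, 1:] = [:0, 1:] ^ order x P * pcompose (cof_at x P) [:x, 1:]" .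
  have c0: "coeff (pcompose (cof_at x P) [:x, 1:]) 0 = poly (cof_at x P) x"
    by (simp add: poly_0_coeff_0[symmetric] poly_pcompose)
  show "i < order x P \<Longrightarrow> coeff (pcompose P [:x, 1:]) i = 0"
    unfolding e coeff_xpow_mult by simp
  show "coeff (pcompose P [:x, 1:]) (order x P) = poly (cof_at x P) x"
    unfolding e coeff_xpow_mult using c0 by simp
qed

section \<open>Local behaviour of a complex polynomial at a real point\<close>

definition local_order :: "'a::linordered_field cpx poly \<Rightarrow> 'a \<Rightarrow> nat" where
  "local_order A x = trailing_degree (translate A x)"

definition local_coeff :: "'a::linordered_field cpx poly \<Rightarrow> 'a \<Rightarrow> 'a cpx" where
  "local_coeff A x = trailing_coeff (translate A x)"

text \<open>The signs of \<open>P\<close> immediately to the right and to the left of \<open>x\<close> (lemma \<open>sgn_poly_near\<close>).\<close>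

definition sgn_right :: "'a::linordered_field poly \<Rightarrow> 'a \<Rightarrow> 'a" where
  "sgn_right P x = sgn (poly (cof_at x P) x)"

definition sgn_left :: "'a::linordered_field poly \<Rightarrow> 'a \<Rightarrow> 'a" where
  "sgn_left P x = (-1) ^ order x P * sgn_right P x"

definition right_jump :: "'a::linordered_field cpx poly \<Rightarrow> 'a \<Rightarrow> 'a" where
  "right_jump A x = Ind_plus x (Re_poly A) (Im_poly A) - Ind_plus x (Im_poly A) (Re_poly A)"

definition left_jump :: "'a::linordered_field cpx poly \<Rightarrow> 'a \<Rightarrow> 'a" where
  "left_jump A x = Ind_minus x (Re_poly A) (Im_poly A) - Ind_minus x (Im_poly A) (Re_poly A)"

lemma sgn_right_0 [simp]: "sgn_right 0 x = 0" by (simp add: sgn_right_def cof_at_def)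
lemma sgn_left_0 [simp]: "sgn_left 0 x = 0" by (simp add: sgn_left_def)

lemma local_coeff_nonzero: "A \<noteq> 0 \<Longrightarrow> local_coeff A x \<noteq> 0"
  unfolding local_coeff_def by (rule trailing_coeff_nonzero) (simp add: translate_eq_0_iff)

lemma local_coeff_order_mult:
  fixes A1 A2 :: "'a::linordered_field cpx poly"
  assumes "A1 \<noteq> 0" "A2 \<noteq> 0"
  shows "local_coeff (A1 * A2) x = local_coeff A1 x * local_coeff A2 x"
    and "local_order (A1 * A2) x = local_order A1 x + local_order A2 x"
  using trailing_mult[of "translate A1 x" "translate A2 x"] assms
  by (simp_all add: local_coeff_def local_order_def translate_mult translate_eq_0_iff)

lemma Re_local_coeff: "Re_c (local_coeff A x) = coeff (pcompose (Re_poly A) [:x, 1:]) (local_order A x)"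
  by (simp add: local_coeff_def local_order_def trailing_coeff_def flip: Re_poly_translate)
lemma Im_local_coeff: "Im_c (local_coeff A x) = coeff (pcompose (Im_poly A) [:x, 1:]) (local_order A x)"
  by (simp add: local_coeff_def local_order_def trailing_coeff_def flip: Im_poly_translate)

lemma coeff_Re_poly_below_local_order: "\<forall>i < local_order A x. coeff (pcompose (Re_poly A) [:x, 1:]) i = 0"
  by (simp add: local_order_def coeff_below_trailing_degree flip: Re_poly_translate)
lemma coeff_Im_poly_below_local_order: "\<forall>i < local_order A x. coeff (pcompose (Im_poly A) [:x, 1:]) i = 0"
  by (simp add: local_order_def coeff_below_trailing_degree flip: Im_poly_translate)

lemma order_from_shifted_coeffs:
  fixes P :: "'a::linordered_field poly"
  assumes below: "\<forall>i<k. coeff (pcompose P [:x, 1:]) i = 0"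
    and g: "g = coeff (pcompose P [:x, 1:]) k"
  shows "g \<noteq> 0 \<Longrightarrow> P \<noteq> 0 \<and> order x P = k \<and> g = poly (cof_at x P) x"
    and "g = 0 \<Longrightarrow> P \<noteq> 0 \<Longrightarrow> k < order x P"
proof -
  have le: "k \<le> order x P" if "P \<noteq> 0"
  proof (rule ccontr)
    assume "\<not> k \<le> order x P"
    hence "coeff (pcompose P [:x, 1:]) (order x P) = 0" using below by auto
    thus False
      using coeff_pcompose_shift_order(2)[OF that, of x] order_cof_decomp(2)[OF that, of x] by simp
  qed
  show "P \<noteq> 0 \<and> order x P = k \<and> g = poly (cof_at x P) x" if "g \<noteq> 0"
  proof -
    have P: "P \<noteq> 0" using that g by auto
    have "\<not> k < order x P" using coeff_pcompose_shift_order(1)[OF P, of k x] that g by auto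
    hence "order x P = k" using le[OF P] by simp
    thus ?thesis using P g coeff_pcompose_shift_order(2)[OF P, of x] by simp
  qed
  show "k < order x P" if "g = 0" "P \<noteq> 0"
  proof -
    have "order x P \<noteq> k"
      using that g coeff_pcompose_shift_order(2)[OF that(2), of x] order_cof_decomp(2)[OF that(2), of x]
      by auto
    thus ?thesis using le[OF that(2)] by simp
  qed
qed

lemmas Re_local_coeff_nonzero =
  order_from_shifted_coeffs(1)[OF coeff_Re_poly_below_local_order Re_local_coeff]
lemmas Re_local_coeff_zero =
  order_from_shifted_coeffs(2)[OF coeff_Re_poly_below_local_order Re_local_coeff]
lemmas Im_local_coeff_nonzero =
  order_from_shifted_coeffs(1)[OF coeff_Im_poly_below_local_order Im_local_coeff]
lemmas Im_local_coeff_zero =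
  order_from_shifted_coeffs(2)[OF coeff_Im_poly_below_local_order Im_local_coeff]

lemma cof_at_uminus: "cof_at x (- P) = - cof_at x P"
proof -
  have "- P = smult (-1) P" by simp
  hence "(- P) div q = smult (-1) (P div q)" for q by (metis div_smult_left)
  thus ?thesis by (simp add: cof_at_def mult_at_def)
qed

lemma Ind_plus_uminus: "Ind_plus x (- Q) P = - Ind_plus x Q P"
  by (simp add: Ind_plus_def val_at_def mult_at_def cof_at_uminus sgn_minus)
lemma Ind_minus_uminus: "Ind_minus x (- Q) P = - Ind_minus x Q P"
  by (simp add: Ind_minus_def val_at_def mult_at_def cof_at_uminus sgn_minus)

lemma Ind_minus_eq_Ind_plus: "Ind_minus x P Q = (-1) ^ (order x P + order x Q) * Ind_plus x P Q"
proof -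
  have "(-1::'a) powi (int a - int b) = (-1) ^ (a + b)" for a b
    by (cases "even a"; cases "even b") (simp_all add: power_int_diff)
  thus ?thesis by (simp add: Ind_minus_def Ind_plus_def val_at_def mult_at_def)
qed

lemma right_jump_local_coeff:
  fixes A :: "'a::linordered_field cpx poly" and x :: 'a
  assumes A: "A \<noteq> 0"
  defines "P \<equiv> Re_poly A" and "Q \<equiv> Im_poly A" and "\<gamma> \<equiv> local_coeff A x"
  shows "right_jump A x = (sgn (Re_c \<gamma>) * sgn_right Q x - sgn (Im_c \<gamma>) * sgn_right P x) / 2"
proof -
  note defs = right_jump_def Ind_plus_def val_at_def mult_at_def sgn_right_def P_def Q_def \<gamma>_def
  have "Re_c \<gamma> \<noteq> 0 \<or> Im_c \<gamma> \<noteq> 0"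
    using local_coeff_nonzero[OF A, of x] by (simp add: cpx_eq_0_iff \<gamma>_def)
  then consider "Re_c \<gamma> \<noteq> 0" "Im_c \<gamma> \<noteq> 0" | "Re_c \<gamma> \<noteq> 0" "Im_c \<gamma> = 0" | "Re_c \<gamma> = 0" "Im_c \<gamma> \<noteq> 0"
    by blast
  thus ?thesis
  proof cases
    case 1
    thus ?thesis
      using Re_local_coeff_nonzero[of A x] Im_local_coeff_nonzero[of A x] by (simp add: defs)
  next
    case 2
    show ?thesis
    proof (cases "Q = 0")
      case False
      thus ?thesis using 2 Re_local_coeff_nonzero[of A x] Im_local_coeff_zero[of A x]
        by (simp add: defs sgn_mult)
    qed (use 2 in \<open>simp add: defs cof_at_def\<close>)
  next
    case 3
    show ?thesis
    proof (cases "P = 0")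
      case False
      thus ?thesis using 3 Im_local_coeff_nonzero[of A x] Re_local_coeff_zero[of A x]
        by (simp add: defs sgn_mult mult.commute)
    qed (use 3 in \<open>simp add: defs cof_at_def\<close>)
  qed
qed

lemma left_jump_local_coeff:
  fixes A :: "'a::linordered_field cpx poly" and x :: 'a
  assumes A: "A \<noteq> 0"
  defines "P \<equiv> Re_poly A" and "Q \<equiv> Im_poly A" and "\<gamma> \<equiv> local_coeff A x" and "k \<equiv> local_order A x"
  shows "left_jump A x =
    (sgn (Re_c \<gamma>) * ((-1) ^ k * sgn_left Q x) - sgn (Im_c \<gamma>) * ((-1) ^ k * sgn_left P x)) / 2"
proof -
  have re: "sgn (Re_c \<gamma>) * (-1) ^ (order x P + order x Q) = sgn (Re_c \<gamma>) * (-1) ^ (k + order x Q)"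
    using Re_local_coeff_nonzero[of A x]
    by (cases "Re_c \<gamma> = 0") (simp_all add: P_def \<gamma>_def k_def)
  have im: "sgn (Im_c \<gamma>) * (-1) ^ (order x P + order x Q) = sgn (Im_c \<gamma>) * (-1) ^ (k + order x P)"
    using Im_local_coeff_nonzero[of A x]
    by (cases "Im_c \<gamma> = 0") (simp_all add: Q_def \<gamma>_def k_def add.commute)
  have "left_jump A x = (-1) ^ (order x P + order x Q) * right_jump A x"
    by (simp add: left_jump_def right_jump_def Ind_minus_eq_Ind_plus P_def Q_def algebra_simps add.commute)
  also have "\<dots> = (sgn (Re_c \<gamma>) * (-1) ^ (order x P + order x Q) * sgn_right Q x
                  - sgn (Im_c \<gamma>) * (-1) ^ (order x P + order x Q) * sgn_right P x) / 2"
    by (simp add: right_jump_local_coeff[OF A] P_def Q_def \<gamma>_def algebra_simps)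
  also have "\<dots> = (sgn (Re_c \<gamma>) * ((-1) ^ k * sgn_left Q x) - sgn (Im_c \<gamma>) * ((-1) ^ k * sgn_left P x)) / 2"
    unfolding re im by (simp add: sgn_left_def power_add algebra_simps)
  finally show ?thesis .
qed

section \<open>Sectors of the plane\<close>

text \<open>\<open>sector z\<close> numbers the position of \<open>z \<noteq> 0\<close> counterclockwise from \<open>0\<close> (positive real axis):
  odd values are the open quadrants, even values the half axes.\<close>

definition isgn :: "'a::linordered_field \<Rightarrow> int" where
  "isgn r = (if r > 0 then 1 else if r < 0 then -1 else 0)"

lemma isgn_cases: "isgn r \<in> {-1, 0, 1}" by (simp add: isgn_def)
lemma isgn_0_iff [simp]: "isgn r = 0 \<longleftrightarrow> r = 0" by (simp add: isgn_def)
lemma isgn_uminus [simp]: "isgn (- r) = - isgn r" by (simp add: isgn_def)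
lemma of_int_isgn: "of_int (isgn r) = sgn r" by (simp add: isgn_def sgn_if)
lemma isgn_pos [simp]: "r > 0 \<Longrightarrow> isgn r = 1" by (simp add: isgn_def)

definition sector_code :: "int \<Rightarrow> int \<Rightarrow> int" where
  "sector_code a b = (if b = 0 then (if a > 0 then 0 else 4)
              else if b > 0 then (if a > 0 then 1 else if a = 0 then 2 else 3)
              else (if a < 0 then 5 else if a = 0 then 6 else 7))"

definition sector :: "'a::linordered_field cpx \<Rightarrow> int" where
  "sector z = sector_code (isgn (Re_c z)) (isgn (Im_c z))"

definition centered_mod8 :: "int \<Rightarrow> int" where "centered_mod8 n = (n + 3) mod 8 - 3"

lemma centered_mod8_mod: "centered_mod8 n mod 8 = n mod 8"
  unfolding centered_mod8_def by (metis add_diff_cancel_right' mod_add_left_eq mod_diff_left_eq)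

lemma centered_mod8_cong: "m mod 8 = n mod 8 \<Longrightarrow> centered_mod8 m = centered_mod8 n"
  unfolding centered_mod8_def by (metis mod_add_left_eq)

definition sector_defect :: "'a::linordered_field cpx \<Rightarrow> 'a cpx \<Rightarrow> int" where
  "sector_defect z1 z2 = centered_mod8 (sector z1 + sector z2 - sector (z1 * z2))"

definition sgn_cross :: "'a::linordered_field cpx \<Rightarrow> 'a cpx \<Rightarrow> int" where
  "sgn_cross g w = isgn (Re_c g) * isgn (Im_c w) - isgn (Im_c g) * isgn (Re_c w)"

definition sgn_compatible :: "'a::linordered_field cpx \<Rightarrow> 'a cpx \<Rightarrow> bool" where
  "sgn_compatible g w \<longleftrightarrow> (Re_c g \<noteq> 0 \<longrightarrow> isgn (Re_c w) = isgn (Re_c g)) \<and> (Im_c g \<noteq> 0 \<longrightarrow> isgn (Im_c w) = isgn (Im_c g))"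

lemma isgn_pair_nonzero: "z \<noteq> 0 \<Longrightarrow> (isgn (Re_c z), isgn (Im_c z)) \<noteq> (0, 0)"
  by (auto simp: cpx_eq_0_iff)

lemma sector_code_sgn_cross:
  assumes "a \<in> {-1,0,1}" "b \<in> {-1,0,1}" "c \<in> {-1,0,1}" "d \<in> {-1,0,1::int}"
    "(a, b) \<noteq> (0, 0)" "(c, d) \<noteq> (0, 0)" "a \<noteq> 0 \<longrightarrow> c = a" "b \<noteq> 0 \<longrightarrow> d = b"
  shows "(a * d - b * c) mod 8 = (sector_code c d - sector_code a b) mod 8 \<and> \<bar>a * d - b * c\<bar> \<le> 1"
  using assms(1-4)
  by (elim insertE emptyE; use assms(5-8) in \<open>simp add: sector_code_def\<close>)

lemma sgn_cross_sector:
  fixes g w :: "'a::linordered_field cpx"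
  assumes "g \<noteq> 0" "w \<noteq> 0" "sgn_compatible g w"
  shows "sgn_cross g w mod 8 = (sector w - sector g) mod 8 \<and> \<bar>sgn_cross g w\<bar> \<le> 1"
  unfolding sgn_cross_def sector_def
  by (rule sector_code_sgn_cross) (use assms isgn_cases isgn_pair_nonzero in \<open>auto simp: sgn_compatible_def\<close>)

lemma sector_code_rotate:
  assumes "a \<in> {-1,0,1}" "b \<in> {-1,0,1::int}" "(a, b) \<noteq> (0, 0)"
  shows "sector_code (- b) a mod 8 = (sector_code a b + 2) mod 8"
  using assms by (auto simp: sector_code_def)

lemma sector_mult_ii: "z \<noteq> 0 \<Longrightarrow> sector (ii * z) mod 8 = (sector z + 2) mod 8"
proof -
  assume z: "z \<noteq> 0"
  have "sector (ii * z) = sector_code (- isgn (Im_c z)) (isgn (Re_c z))" by (simp add: sector_def)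
  thus ?thesis
    unfolding sector_def
    using sector_code_rotate[OF isgn_cases isgn_cases isgn_pair_nonzero[OF z]] by simp
qed

lemma sector_defect_mult_ii:
  fixes z1 z2 :: "'a::linordered_field cpx"
  assumes "z1 \<noteq> 0" "z2 \<noteq> 0"
  shows "sector_defect (ii * z1) z2 = sector_defect z1 z2"
proof -
  have "z1 * z2 \<noteq> 0" using assms by simp
  hence "(sector (ii * z1) + sector z2 - sector (ii * (z1 * z2))) mod 8
         = ((sector z1 + 2) + sector z2 - (sector (z1 * z2) + 2)) mod 8"
    using sector_mult_ii[OF assms(1)] sector_mult_ii[of "z1 * z2"]
    by (intro mod_diff_cong mod_add_cong) auto
  thus ?thesis
    unfolding sector_defect_def by (intro centered_mod8_cong) (simp add: mult.assoc add_diff_eq)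
qed

lemma sector_defect_commute: "sector_defect z1 z2 = sector_defect z2 z1"
  by (simp add: sector_defect_def mult.commute add.commute)

lemma sector_defect_ii_power:
  fixes z1 z2 :: "'a::linordered_field cpx"
  assumes "z1 \<noteq> 0" "z2 \<noteq> 0"
  shows "sector_defect (ii ^ m * z1) (ii ^ n * z2) = sector_defect z1 z2"
proof -
  have left: "sector_defect (ii ^ m * w1) w2 = sector_defect w1 w2" if "w1 \<noteq> 0" "w2 \<noteq> 0" for m and w1 w2 :: "'a cpx"
  proof (induction m)
    case (Suc m)
    have "sector_defect (ii ^ Suc m * w1) w2 = sector_defect (ii * (ii ^ m * w1)) w2"
      by (simp add: mult.assoc)
    also have "\<dots> = sector_defect (ii ^ m * w1) w2"
      using that by (intro sector_defect_mult_ii) auto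
    finally show ?case using Suc by simp
  qed simp
  have "sector_defect (ii ^ m * z1) (ii ^ n * z2) = sector_defect z1 (ii ^ n * z2)"
    using assms by (intro left) auto
  also have "\<dots> = sector_defect z1 z2"
    using left[of z2 z1 n] assms by (simp add: sector_defect_commute)
  finally show ?thesis .
qed

lemma sector_defect_neg_one_power:
  fixes z1 z2 :: "'a::linordered_field cpx"
  assumes "z1 \<noteq> 0" "z2 \<noteq> 0"
  shows "sector_defect ((-1) ^ m * z1) ((-1) ^ n * z2) = sector_defect z1 z2"
proof -
  have "ii * ii = (-1 :: 'a cpx)" by (simp add: cpx_eq_iff)
  hence "(-1) ^ k = (ii :: 'a cpx) ^ (2 * k)" for k by (simp add: power_mult power2_eq_square)
  thus ?thesis using sector_defect_ii_power[OF assms] by simp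
qed

lemma rotate_to_first_quadrant:
  fixes z :: "'a::linordered_field cpx"
  assumes "z \<noteq> 0"
  shows "\<exists>j. Re_c (ii ^ j * z) > 0 \<and> Im_c (ii ^ j * z) \<ge> 0"
proof -
  have i2: "ii ^ 2 * z = - z" by (simp add: cpx_eq_iff power2_eq_square)
  have i3: "ii ^ 3 * z = - (ii * z)" by (simp add: cpx_eq_iff power3_eq_cube)
  have nz: "Re_c z \<noteq> 0 \<or> Im_c z \<noteq> 0" using assms by (simp add: cpx_eq_0_iff)
  have disj: "(r>0 \<and> s\<ge>0) \<or> (r\<le>0 \<and> s>0) \<or> (r<0 \<and> s\<le>0) \<or> (r\<ge>0 \<and> s<0)"
    if "r \<noteq> 0 \<or> s \<noteq> 0" for r s :: 'a
    using that by (cases "r > 0"; cases "s > 0"; cases "r < 0"; cases "s < 0"; auto)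
  consider "Re_c z > 0 \<and> Im_c z \<ge> 0" | "Re_c z \<le> 0 \<and> Im_c z > 0" | "Re_c z < 0 \<and> Im_c z \<le> 0" | "Re_c z \<ge> 0 \<and> Im_c z < 0"
    using disj[OF nz] by blast
  thus ?thesis
  proof cases
    case 1 thus ?thesis by (intro exI[of _ 0]) simp
  next
    case 2 thus ?thesis by (intro exI[of _ 3]) (simp add: i3)
  next
    case 3 thus ?thesis by (intro exI[of _ 2]) (simp add: i2)
  next
    case 4 thus ?thesis by (intro exI[of _ 1]) simp
  qed
qed

lemma sector_defect_first_quadrant:
  fixes z1 z2 :: "'a::linordered_field cpx"
  assumes "Re_c z1 > 0" "Im_c z1 \<ge> 0" "Re_c z2 > 0" "Im_c z2 \<ge> 0"
  shows "-2 \<le> sector_defect z1 z2 \<and> sector_defect z1 z2 \<le> 2"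
proof -
  define a where "a = Re_c z1"
  define b where "b = Im_c z1"
  define c where "c = Re_c z2"
  define d where "d = Im_c z2"
  have ac: "a * c > 0" using assms by (simp add: a_def c_def)
  consider "b = 0" "d = 0" | "b = 0" "d > 0" | "b > 0" "d = 0" | "b > 0" "d > 0"
    using assms unfolding b_def d_def by fastforce
  thus ?thesis
  proof cases
    case 1
    hence "sector z1 = 0" "sector z2 = 0" "sector (z1 * z2) = 0"
      using assms ac by (simp_all add: sector_def sector_code_def a_def b_def c_def d_def)
    thus ?thesis by (simp add: sector_defect_def centered_mod8_def)
  next
    case 2
    have "a * d > 0" using assms 2 by (simp add: a_def)
    hence "sector z1 = 0" "sector z2 = 1" "sector (z1 * z2) = 1"
      using assms ac 2 by (simp_all add: sector_def sector_code_def a_def b_def c_def d_def)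
    thus ?thesis by (simp add: sector_defect_def centered_mod8_def)
  next
    case 3
    have "b * c > 0" using assms 3 by (simp add: c_def)
    hence "sector z1 = 1" "sector z2 = 0" "sector (z1 * z2) = 1"
      using assms ac 3 by (simp_all add: sector_def sector_code_def a_def b_def c_def d_def)
    thus ?thesis by (simp add: sector_defect_def centered_mod8_def)
  next
    case 4
    have "a * d + b * c > 0" using assms 4 ac by (simp add: a_def c_def add_pos_pos)
    hence im: "Im_c (z1 * z2) > 0" by (simp add: a_def b_def c_def d_def)
    have "sector z1 = 1" "sector z2 = 1"
      using assms 4 by (simp_all add: sector_def sector_code_def a_def b_def c_def d_def)
    moreover have "sector (z1 * z2) \<in> {1, 2, 3}"
      using im by (auto simp: sector_def sector_code_def isgn_def)
    ultimately show ?thesis by (auto simp: sector_defect_def centered_mod8_def)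
  qed
qed

lemma sector_defect_bounds:
  fixes z1 z2 :: "'a::linordered_field cpx"
  assumes "z1 \<noteq> 0" "z2 \<noteq> 0"
  shows "-2 \<le> sector_defect z1 z2 \<and> sector_defect z1 z2 \<le> 2"
proof -
  obtain j where j: "Re_c (ii ^ j * z1) > 0" "Im_c (ii ^ j * z1) \<ge> 0"
    using rotate_to_first_quadrant[OF assms(1)] by blast
  obtain l where l: "Re_c (ii ^ l * z2) > 0" "Im_c (ii ^ l * z2) \<ge> 0"
    using rotate_to_first_quadrant[OF assms(2)] by blast
  thus ?thesis using sector_defect_first_quadrant[OF j l] sector_defect_ii_power[OF assms] by simp
qed

text \<open>Both sides are congruent modulo 8, because \<open>sgn_cross g w \<equiv> sector w - sector g\<close>, and they
  differ by at most 7.\<close>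

lemma sgn_cross_mult:
  fixes g1 g2 w1 w2 :: "'a::linordered_field cpx"
  assumes nz: "g1 \<noteq> 0" "g2 \<noteq> 0" "w1 \<noteq> 0" "w2 \<noteq> 0"
    and c: "sgn_compatible g1 w1" "sgn_compatible g2 w2" "sgn_compatible (g1 * g2) (w1 * w2)"
  shows "sgn_cross (g1 * g2) (w1 * w2) = sgn_cross g1 w1 + sgn_cross g2 w2 + sector_defect g1 g2 - sector_defect w1 w2"
proof -
  have nz12: "g1 * g2 \<noteq> 0" "w1 * w2 \<noteq> 0" using nz by simp_all
  note O1 = sgn_cross_sector[OF nz(1) nz(3) c(1)]
  note O2 = sgn_cross_sector[OF nz(2) nz(4) c(2)]
  note O12 = sgn_cross_sector[OF nz12 c(3)]
  note Kg = sector_defect_bounds[OF nz(1,2)]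
  note Kv = sector_defect_bounds[OF nz(3,4)]
  have Kgm: "sector_defect g1 g2 mod 8 = (sector g1 + sector g2 - sector (g1 * g2)) mod 8"
    unfolding sector_defect_def by (rule centered_mod8_mod)
  have Kvm: "sector_defect w1 w2 mod 8 = (sector w1 + sector w2 - sector (w1 * w2)) mod 8"
    unfolding sector_defect_def by (rule centered_mod8_mod)
  define D where "D = sgn_cross (g1 * g2) (w1 * w2)
    - (sgn_cross g1 w1 + sgn_cross g2 w2 + sector_defect g1 g2 - sector_defect w1 w2)"
  have d1: "8 dvd (sgn_cross (g1 * g2) (w1 * w2) - (sector (w1 * w2) - sector (g1 * g2)))"
    using O12 mod_eq_dvd_iff by blast
  have d2: "8 dvd (sgn_cross g1 w1 - (sector w1 - sector g1))" using O1 mod_eq_dvd_iff by blast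
  have d3: "8 dvd (sgn_cross g2 w2 - (sector w2 - sector g2))" using O2 mod_eq_dvd_iff by blast
  have d4: "8 dvd (sector_defect g1 g2 - (sector g1 + sector g2 - sector (g1 * g2)))"
    using Kgm mod_eq_dvd_iff by blast
  have d5: "8 dvd (sector_defect w1 w2 - (sector w1 + sector w2 - sector (w1 * w2)))"
    using Kvm mod_eq_dvd_iff by blast
  have eq: "D = (sgn_cross (g1 * g2) (w1 * w2) - (sector (w1 * w2) - sector (g1 * g2)))
            - (sgn_cross g1 w1 - (sector w1 - sector g1)) - (sgn_cross g2 w2 - (sector w2 - sector g2))
            - (sector_defect g1 g2 - (sector g1 + sector g2 - sector (g1 * g2)))
            + (sector_defect w1 w2 - (sector w1 + sector w2 - sector (w1 * w2)))"
    unfolding D_def by (simp add: algebra_simps)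
  have "8 dvd D" unfolding eq by (intro dvd_add dvd_diff d1 d2 d3 d4 d5)
  moreover have "-7 \<le> D" "D \<le> 7"
    unfolding D_def using O1 O2 O12 Kg Kv by (simp_all add: abs_le_iff; linarith)+
  ultimately have "D = 0" by presburger
  thus ?thesis unfolding D_def by simp
qed

section \<open>The index along an edge\<close>

lemma sgn_poly_near:
  fixes P :: "'a::real_closed_field poly"
  assumes P: "P \<noteq> 0" and tx: "t \<noteq> x"
    and no_root: "\<And>y. y \<noteq> x \<Longrightarrow> min x t \<le> y \<Longrightarrow> y \<le> max x t \<Longrightarrow> poly P y \<noteq> 0"
  shows "sgn (poly P t) = sgn (t - x) ^ order x P * sgn_right P x"
proof -
  define C where "C = cof_at x P"
  define m where "m = order x P"
  have PC: "P = [:-x, 1:] ^ m * C" unfolding C_def m_def by (rule order_cof_decomp(1)[OF P])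
  have Cx: "poly C x \<noteq> 0" unfolding C_def by (rule order_cof_decomp(2)[OF P])
  have C_no_root: "poly C y \<noteq> 0" if "min x t \<le> y" "y \<le> max x t" for y
    using no_root[OF _ that] Cx PC by (cases "y = x") auto
  have "sgn (poly C (min x t)) = sgn (poly C (max x t))"
    by (rule poly_sgn_eq_no_root) (use C_no_root in auto)
  hence "sgn (poly C t) = sgn (poly C x)" by (cases "x \<le> t") (simp_all add: min_def max_def)
  moreover have "sgn (poly P t) = sgn (t - x) ^ m * sgn (poly C t)"
    by (subst PC) (simp add: sgn_mult power_sgn)
  ultimately show ?thesis by (simp add: sgn_right_def C_def m_def)
qed

definition parts_root_free :: "'a::linordered_field cpx poly \<Rightarrow> 'a set \<Rightarrow> bool" where
  "parts_root_free A S \<longleftrightarrow> (\<forall>P\<in>{Re_poly A, Im_poly A}. P \<noteq> 0 \<longrightarrow> (\<forall>y\<in>S. poly P y \<noteq> 0))"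

lemma parts_root_free_subset: "parts_root_free A S \<Longrightarrow> T \<subseteq> S \<Longrightarrow> parts_root_free A T"
  unfolding parts_root_free_def by blast

lemma parts_root_free_poly_nonzero:
  assumes "A \<noteq> 0" "parts_root_free A S" "t \<in> S"
  shows "poly A (cpx_of t) \<noteq> 0"
proof
  assume "poly A (cpx_of t) = 0"
  hence "poly (Re_poly A) t = 0" "poly (Im_poly A) t = 0"
    by (metis Re_c_0 Re_c_poly, metis Im_c_0 Im_c_poly)
  moreover have "Re_poly A \<noteq> 0 \<or> Im_poly A \<noteq> 0"
    using assms(1) cpx_poly_eq_0_iff by blast
  ultimately show False using assms(2,3) unfolding parts_root_free_def by auto
qed

lemma sgn_parts_right:
  fixes A :: "'a::real_closed_field cpx poly"
  assumes "x < t" "parts_root_free A {x<..t}" "P \<in> {Re_poly A, Im_poly A}"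
  shows "sgn (poly P t) = sgn_right P x"
proof (cases "P = 0")
  case False
  have "sgn (poly P t) = sgn (t - x) ^ order x P * sgn_right P x"
    by (rule sgn_poly_near[OF False]) (use assms False in \<open>auto simp: parts_root_free_def\<close>)
  thus ?thesis using assms(1) by simp
qed simp

lemma sgn_parts_left:
  fixes A :: "'a::real_closed_field cpx poly"
  assumes "t < x" "parts_root_free A {t..<x}" "P \<in> {Re_poly A, Im_poly A}"
  shows "sgn (poly P t) = sgn_left P x"
proof (cases "P = 0")
  case False
  have "sgn (poly P t) = sgn (t - x) ^ order x P * sgn_right P x"
    by (rule sgn_poly_near[OF False]) (use assms False in \<open>auto simp: parts_root_free_def\<close>)
  thus ?thesis using assms(1) by (simp add: sgn_left_def)
qed simp

lemma isgn_eqI: "sgn r = sgn s \<Longrightarrow> isgn r = isgn (s :: 'a::linordered_field)"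
  by (metis of_int_eq_iff of_int_isgn)

lemma sgn_neg_one_power: "sgn ((-1) ^ k * r) = (-1) ^ k * sgn (r :: 'a::linordered_field)"
  by (simp add: sgn_mult power_sgn)

lemma right_jump_sgn_cross:
  fixes A :: "'a::real_closed_field cpx poly"
  assumes A: "A \<noteq> 0" and xt: "x < t" and free: "parts_root_free A {x<..t}"
  defines "\<gamma> \<equiv> local_coeff A x" and "w \<equiv> poly A (cpx_of t)"
  shows "right_jump A x = of_int (sgn_cross \<gamma> w) / 2" and "sgn_compatible \<gamma> w" and "w \<noteq> 0"
proof -
  have re: "sgn (Re_c w) = sgn_right (Re_poly A) x" and im: "sgn (Im_c w) = sgn_right (Im_poly A) x"
    using sgn_parts_right[OF xt free] by (simp_all add: w_def Re_c_poly Im_c_poly)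
  show "right_jump A x = of_int (sgn_cross \<gamma> w) / 2"
    unfolding right_jump_local_coeff[OF A] sgn_cross_def
    by (simp add: of_int_isgn re im \<gamma>_def)
  show "sgn_compatible \<gamma> w"
    unfolding sgn_compatible_def
  proof (intro conjI impI)
    assume "Re_c \<gamma> \<noteq> 0"
    from Re_local_coeff_nonzero[OF this[unfolded \<gamma>_def]] show "isgn (Re_c w) = isgn (Re_c \<gamma>)"
      by (intro isgn_eqI) (simp add: re sgn_right_def \<gamma>_def)
  next
    assume "Im_c \<gamma> \<noteq> 0"
    from Im_local_coeff_nonzero[OF this[unfolded \<gamma>_def]] show "isgn (Im_c w) = isgn (Im_c \<gamma>)"
      by (intro isgn_eqI) (simp add: im sgn_right_def \<gamma>_def)
  qed
  show "w \<noteq> 0"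
    unfolding w_def by (rule parts_root_free_poly_nonzero[OF A free]) (use xt in simp)
qed

lemma left_jump_sgn_cross:
  fixes A :: "'a::real_closed_field cpx poly"
  assumes A: "A \<noteq> 0" and tx: "t < x" and free: "parts_root_free A {t..<x}"
  defines "\<gamma> \<equiv> local_coeff A x" and "w \<equiv> (-1) ^ local_order A x * poly A (cpx_of t)"
  shows "left_jump A x = of_int (sgn_cross \<gamma> w) / 2" and "sgn_compatible \<gamma> w" and "w \<noteq> 0"
proof -
  define k where "k = local_order A x"
  have re: "sgn (Re_c w) = (-1) ^ k * sgn_left (Re_poly A) x"
    and im: "sgn (Im_c w) = (-1) ^ k * sgn_left (Im_poly A) x"
    using sgn_parts_left[OF tx free] unfolding w_def Re_c_neg_one_power Im_c_neg_one_power
    by (simp_all add: k_def Re_c_poly Im_c_poly sgn_neg_one_power)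
  have kk: "(-1::'a) ^ k * (-1) ^ k = 1" by (simp flip: power_add)
  show "left_jump A x = of_int (sgn_cross \<gamma> w) / 2"
    unfolding left_jump_local_coeff[OF A] sgn_cross_def
    by (simp add: of_int_isgn re im \<gamma>_def k_def)
  show "sgn_compatible \<gamma> w"
    unfolding sgn_compatible_def
  proof (intro conjI impI)
    assume "Re_c \<gamma> \<noteq> 0"
    from Re_local_coeff_nonzero[OF this[unfolded \<gamma>_def]] show "isgn (Re_c w) = isgn (Re_c \<gamma>)"
      by (intro isgn_eqI) (simp add: re sgn_left_def sgn_right_def \<gamma>_def k_def mult.assoc[symmetric] kk)
  next
    assume "Im_c \<gamma> \<noteq> 0"
    from Im_local_coeff_nonzero[OF this[unfolded \<gamma>_def]] show "isgn (Im_c w) = isgn (Im_c \<gamma>)"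
      by (intro isgn_eqI) (simp add: im sgn_left_def sgn_right_def \<gamma>_def k_def mult.assoc[symmetric] kk)
  qed
  have "poly A (cpx_of t) \<noteq> 0"
    by (rule parts_root_free_poly_nonzero[OF A free]) (use tx in simp)
  thus "w \<noteq> 0" by (simp add: w_def)
qed

lemma right_jump_mult:
  fixes A1 A2 :: "'a::real_closed_field cpx poly"
  assumes A1: "A1 \<noteq> 0" and A2: "A2 \<noteq> 0" and xt: "x < t"
    and free1: "parts_root_free A1 {x<..t}" and free2: "parts_root_free A2 {x<..t}"
    and free: "parts_root_free (A1 * A2) {x<..t}"
  shows "right_jump (A1 * A2) x - right_jump A1 x - right_jump A2 x
       = of_int (sector_defect (local_coeff A1 x) (local_coeff A2 x)
                 - sector_defect (poly A1 (cpx_of t)) (poly A2 (cpx_of t))) / 2"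
proof -
  have A: "A1 * A2 \<noteq> 0" using A1 A2 by simp
  define \<gamma>1 \<gamma>2 w1 w2 where "\<gamma>1 = local_coeff A1 x" and "\<gamma>2 = local_coeff A2 x"
    and "w1 = poly A1 (cpx_of t)" and "w2 = poly A2 (cpx_of t)"
  note mult = local_coeff_order_mult[OF A1 A2, of x, folded \<gamma>1_def \<gamma>2_def]
  have w12: "poly (A1 * A2) (cpx_of t) = w1 * w2" by (simp add: w1_def w2_def)
  note J1 = right_jump_sgn_cross[OF A1 xt free1, folded \<gamma>1_def w1_def]
    and J2 = right_jump_sgn_cross[OF A2 xt free2, folded \<gamma>2_def w2_def]
    and J = right_jump_sgn_cross[OF A xt free, unfolded mult w12]
  have "sgn_cross (\<gamma>1 * \<gamma>2) (w1 * w2)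
      = sgn_cross \<gamma>1 w1 + sgn_cross \<gamma>2 w2 + sector_defect \<gamma>1 \<gamma>2 - sector_defect w1 w2"
    using J1(2,3) J2(2,3) J(2) local_coeff_nonzero[OF A1] local_coeff_nonzero[OF A2]
    unfolding \<gamma>1_def \<gamma>2_def by (intro sgn_cross_mult) auto
  hence "right_jump (A1 * A2) x
      = of_int (sgn_cross \<gamma>1 w1 + sgn_cross \<gamma>2 w2 + sector_defect \<gamma>1 \<gamma>2 - sector_defect w1 w2) / 2"
    by (simp only: J(1))
  also have "\<dots> = right_jump A1 x + right_jump A2 x + of_int (sector_defect \<gamma>1 \<gamma>2 - sector_defect w1 w2) / 2"
    unfolding J1(1) J2(1) by (simp add: field_simps)
  finally show ?thesis by (simp add: \<gamma>1_def \<gamma>2_def w1_def w2_def)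
qed

lemma left_jump_mult:
  fixes A1 A2 :: "'a::real_closed_field cpx poly"
  assumes A1: "A1 \<noteq> 0" and A2: "A2 \<noteq> 0" and tx: "t < x"
    and free1: "parts_root_free A1 {t..<x}" and free2: "parts_root_free A2 {t..<x}"
    and free: "parts_root_free (A1 * A2) {t..<x}"
  shows "left_jump (A1 * A2) x - left_jump A1 x - left_jump A2 x
       = of_int (sector_defect (local_coeff A1 x) (local_coeff A2 x)
                 - sector_defect (poly A1 (cpx_of t)) (poly A2 (cpx_of t))) / 2"
proof -
  have A: "A1 * A2 \<noteq> 0" using A1 A2 by simp
  define \<gamma>1 \<gamma>2 where "\<gamma>1 = local_coeff A1 x" and "\<gamma>2 = local_coeff A2 x"
  define w1 where "w1 = (-1) ^ local_order A1 x * poly A1 (cpx_of t)"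
  define w2 where "w2 = (-1) ^ local_order A2 x * poly A2 (cpx_of t)"
  note mult = local_coeff_order_mult[OF A1 A2, of x, folded \<gamma>1_def \<gamma>2_def]
  have w12: "(-1) ^ local_order (A1 * A2) x * poly (A1 * A2) (cpx_of t) = w1 * w2"
    by (simp add: w1_def w2_def mult power_add algebra_simps)
  note J1 = left_jump_sgn_cross[OF A1 tx free1, folded \<gamma>1_def w1_def]
    and J2 = left_jump_sgn_cross[OF A2 tx free2, folded \<gamma>2_def w2_def]
    and J = left_jump_sgn_cross[OF A tx free, unfolded w12 mult(1)]
  have "sgn_cross (\<gamma>1 * \<gamma>2) (w1 * w2)
      = sgn_cross \<gamma>1 w1 + sgn_cross \<gamma>2 w2 + sector_defect \<gamma>1 \<gamma>2 - sector_defect w1 w2"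
    using J1(2,3) J2(2,3) J(2) local_coeff_nonzero[OF A1] local_coeff_nonzero[OF A2]
    unfolding \<gamma>1_def \<gamma>2_def by (intro sgn_cross_mult) auto
  hence "left_jump (A1 * A2) x
      = of_int (sgn_cross \<gamma>1 w1 + sgn_cross \<gamma>2 w2 + sector_defect \<gamma>1 \<gamma>2 - sector_defect w1 w2) / 2"
    by (simp only: J(1))
  also have "\<dots> = left_jump A1 x + left_jump A2 x + of_int (sector_defect \<gamma>1 \<gamma>2 - sector_defect w1 w2) / 2"
    unfolding J1(1) J2(1) by (simp add: field_simps)
  also have "sector_defect w1 w2 = sector_defect (poly A1 (cpx_of t)) (poly A2 (cpx_of t))"
    using J1(3) J2(3) unfolding w1_def w2_def by (intro sector_defect_neg_one_power) auto
  finally show ?thesis by (simp add: \<gamma>1_def \<gamma>2_def)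
qed

definition critical_points :: "'a::linordered_field \<Rightarrow> 'a \<Rightarrow> 'a cpx poly list \<Rightarrow> 'a set" where
  "critical_points a b As =
     {a, b} \<union> {x. a < x \<and> x < b \<and> (\<exists>A\<in>set As. \<not> parts_root_free A {x})}"

lemma finite_critical_points: "finite (critical_points a b As)"
proof -
  have "{x. a < x \<and> x < b \<and> (\<exists>A\<in>set As. \<not> parts_root_free A {x})}
        \<subseteq> (\<Union>A\<in>set As. \<Union>P\<in>{P\<in>{Re_poly A, Im_poly A}. P \<noteq> 0}. {x. poly P x = 0})"
    by (auto simp: parts_root_free_def)
  moreover have "finite (\<Union>A\<in>set As. \<Union>P\<in>{P\<in>{Re_poly A, Im_poly A}. P \<noteq> 0}. {x. poly P x = 0})"
    by (auto intro: poly_roots_finite)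
  ultimately show ?thesis
    unfolding critical_points_def by (meson finite_Un finite_insert finite_subset finite.emptyI)
qed

lemma critical_points_subset: "a < b \<Longrightarrow> critical_points a b As \<subseteq> {a..b}"
  by (auto simp: critical_points_def)

lemma critical_points_ends: "a \<in> critical_points a b As" "b \<in> critical_points a b As"
  by (auto simp: critical_points_def)

lemma critical_points_root:
  assumes "A \<in> set As" "P \<in> {Re_poly A, Im_poly A}" "P \<noteq> 0" "a < y" "y < b" "poly P y = 0"
  shows "y \<in> critical_points a b As"
  using assms by (auto simp: critical_points_def parts_root_free_def)

lemma parts_root_free_between_critical_points:
  assumes "A \<in> set As" "a \<le> u" "v \<le> b" and gap: "\<And>w. w \<in> critical_points a b As \<Longrightarrow> w \<le> u \<or> v \<le> w"
  shows "parts_root_free A {u<..<v}"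
  unfolding parts_root_free_def
proof (intro ballI impI)
  fix P y assume P: "P \<in> {Re_poly A, Im_poly A}" "P \<noteq> 0" and y: "y \<in> {u<..<v}"
  show "poly P y \<noteq> 0"
  proof
    assume "poly P y = 0"
    hence "y \<in> critical_points a b As" using assms(1-3) P y by (intro critical_points_root) auto
    thus False using gap y by force
  qed
qed

definition next_in :: "'b::linorder set \<Rightarrow> 'b \<Rightarrow> 'b" where "next_in S x = Min {y\<in>S. x < y}"
definition prev_in :: "'b::linorder set \<Rightarrow> 'b \<Rightarrow> 'b" where "prev_in S y = Max {x\<in>S. x < y}"

lemma next_in_props:
  assumes "finite S" "z \<in> S" "x < z"
  shows "next_in S x \<in> S" "x < next_in S x" "\<And>y. y \<in> S \<Longrightarrow> x < y \<Longrightarrow> next_in S x \<le> y"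
proof -
  have f: "finite {y\<in>S. x < y}" using assms(1) by simp
  have ne: "{y\<in>S. x < y} \<noteq> {}" using assms by auto
  have "next_in S x \<in> {y\<in>S. x < y}" unfolding next_in_def using Min_in[OF f ne] .
  thus "next_in S x \<in> S" "x < next_in S x" by auto
  show "next_in S x \<le> y" if "y \<in> S" "x < y" for y
    unfolding next_in_def using that f by (intro Min_le) auto
qed

lemma prev_in_props:
  assumes "finite S" "z \<in> S" "z < y"
  shows "prev_in S y \<in> S" "prev_in S y < y" "\<And>x. x \<in> S \<Longrightarrow> x < y \<Longrightarrow> x \<le> prev_in S y"
proof -
  have f: "finite {x\<in>S. x < y}" using assms(1) by simp
  have ne: "{x\<in>S. x < y} \<noteq> {}" using assms by auto
  have "prev_in S y \<in> {x\<in>S. x < y}" unfolding prev_in_def using Max_in[OF f ne] .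
  thus "prev_in S y \<in> S" "prev_in S y < y" by auto
  show "x \<le> prev_in S y" if "x \<in> S" "x < y" for x
    unfolding prev_in_def using that f by (intro Max_ge) auto
qed

lemma prev_in_next_in:
  assumes "finite S" "x \<in> S" "z \<in> S" "x < z"
  shows "prev_in S (next_in S x) = x"
proof -
  note N = next_in_props[OF assms(1,3,4)]
  note P = prev_in_props[OF assms(1,2) N(2)]
  have "x \<le> prev_in S (next_in S x)" using P(3)[OF assms(2) N(2)] .
  moreover have "\<not> x < prev_in S (next_in S x)"
    using N(3)[OF P(1)] P(2) by (meson leD)
  ultimately show ?thesis by simp
qed

lemma next_in_prev_in:
  assumes "finite S" "y \<in> S" "z \<in> S" "z < y"
  shows "next_in S (prev_in S y) = y"
proof -
  note P = prev_in_props[OF assms(1,3,4)]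
  note N = next_in_props[OF assms(1,2) P(2)]
  have "next_in S (prev_in S y) \<le> y" using N(3)[OF assms(2) P(2)] .
  moreover have "\<not> next_in S (prev_in S y) < y"
    using P(3)[OF N(1)] N(2) by (meson leD)
  ultimately show ?thesis by simp
qed

lemma sum_next_in_eq_sum_prev_in:
  fixes S :: "'b::linorder set"
  assumes S: "finite S" "a \<in> S" "b \<in> S" "\<And>x. x \<in> S \<Longrightarrow> a \<le> x \<and> x \<le> b"
  shows "(\<Sum>x\<in>{x\<in>S. x < b}. f x (next_in S x)) = (\<Sum>y\<in>{y\<in>S. a < y}. f (prev_in S y) y)"
proof (rule sum.reindex_bij_witness[where i = "prev_in S" and j = "next_in S"])
  fix x assume x: "x \<in> {x\<in>S. x < b}"
  show "prev_in S (next_in S x) = x" using prev_in_next_in[OF S(1) _ S(3)] x by auto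
  show "next_in S x \<in> {y\<in>S. a < y}"
    using next_in_props(1,2)[OF S(1,3), of x] x S(4) by force
  show "f (prev_in S (next_in S x)) (next_in S x) = f x (next_in S x)"
    using prev_in_next_in[OF S(1) _ S(3)] x by auto
next
  fix y assume y: "y \<in> {y\<in>S. a < y}"
  show "next_in S (prev_in S y) = y" using next_in_prev_in[OF S(1) _ S(2)] y by auto
  show "prev_in S y \<in> {x\<in>S. x < b}"
    using prev_in_props(1,2)[OF S(1,2), of y] y S(4) by force
qed

lemma parts_root_free_after_critical_point:
  assumes ab: "a < b" and A: "A \<in> set As" and x: "x \<in> critical_points a b As" "x < b"
  defines "S \<equiv> critical_points a b As"
  shows "parts_root_free A {x<..<next_in S x}"
proof -
  have S: "finite S" "b \<in> S" "S \<subseteq> {a..b}"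
    unfolding S_def by (simp_all add: finite_critical_points critical_points_ends critical_points_subset[OF ab])
  note N = next_in_props[OF S(1,2) x(2)]
  show ?thesis
  proof (rule parts_root_free_between_critical_points[OF A])
    show "a \<le> x" "next_in S x \<le> b" using x N(1) S(3) by (auto simp: S_def)
    show "w \<le> x \<or> next_in S x \<le> w" if "w \<in> critical_points a b As" for w
      using N(3)[of w] that by (force simp: S_def)
  qed
qed

lemma parts_root_free_before_critical_point:
  assumes ab: "a < b" and A: "A \<in> set As" and y: "y \<in> critical_points a b As" "a < y"
  defines "S \<equiv> critical_points a b As"
  shows "parts_root_free A {prev_in S y<..<y}"
proof -
  have S: "finite S" "a \<in> S" "S \<subseteq> {a..b}"
    unfolding S_def by (simp_all add: finite_critical_points critical_points_ends critical_points_subset[OF ab])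
  note P = prev_in_props[OF S(1,2) y(2)]
  show ?thesis
  proof (rule parts_root_free_between_critical_points[OF A])
    show "a \<le> prev_in S y" "y \<le> b" using y P(1) S(3) by (auto simp: S_def)
    show "w \<le> prev_in S y \<or> y \<le> w" if "w \<in> critical_points a b As" for w
      using P(3)[of w] that by (force simp: S_def)
  qed
qed

definition edge_index :: "'a::linordered_field \<Rightarrow> 'a \<Rightarrow> 'a cpx poly \<Rightarrow> 'a" where
  "edge_index a b A = Ind a b (Re_poly A) (Im_poly A) + Ind a b (- Im_poly A) (Re_poly A)"

lemma Ind_at_uminus: "Ind_at x (- Q) P = - Ind_at x Q P"
  by (simp add: Ind_at_def Ind_plus_uminus Ind_minus_uminus)

lemma Ind_at_nonzero_root:
  assumes "Ind_at x P Q \<noteq> 0"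
  shows "Q \<noteq> 0 \<and> poly Q x = 0"
proof -
  have "P \<noteq> 0 \<and> Q \<noteq> 0 \<and> val_at x P Q < 0"
    using assms by (auto simp: Ind_at_def Ind_plus_def Ind_minus_def split: if_splits)
  hence "Q \<noteq> 0" "order x Q \<noteq> 0" by (auto simp: val_at_def mult_at_def)
  thus ?thesis using order_root by blast
qed

lemma Ind_lt_superset:
  assumes "finite T" "T \<subseteq> {a<..<b}" "\<And>x. a < x \<Longrightarrow> x < b \<Longrightarrow> Ind_at x P Q \<noteq> 0 \<Longrightarrow> x \<in> T"
  shows "Ind_lt a b P Q = Ind_plus a P Q + (\<Sum>x\<in>T. Ind_at x P Q) - Ind_minus b P Q"
proof -
  have "(\<Sum>x\<in>{x. a < x \<and> x < b \<and> Ind_at x P Q \<noteq> 0}. Ind_at x P Q) = (\<Sum>x\<in>T. Ind_at x P Q)"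
    by (rule sum.mono_neutral_left) (use assms in auto)
  thus ?thesis by (simp add: Ind_lt_def)
qed

lemma edge_index_local_sum:
  fixes A :: "'a::linordered_field cpx poly"
  assumes ab: "a < b" and A: "A \<in> set As"
  defines "S \<equiv> critical_points a b As"
  shows "edge_index a b A = (\<Sum>x\<in>{x\<in>S. x < b}. right_jump A x) - (\<Sum>x\<in>{x\<in>S. a < x}. left_jump A x)"
proof -
  define P where "P = Re_poly A"
  define Q where "Q = Im_poly A"
  define T where "T = {x\<in>S. a < x \<and> x < b}"
  have fT: "finite T"
    using finite_critical_points[of a b As] unfolding T_def S_def by (rule rev_finite_subset) auto
  have TS: "T \<subseteq> {a<..<b}" by (auto simp: T_def)
  have I1: "Ind_lt a b P Q = Ind_plus a P Q + (\<Sum>x\<in>T. Ind_at x P Q) - Ind_minus b P Q"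
  proof (rule Ind_lt_superset[OF fT TS])
    fix x assume "a < x" "x < b" "Ind_at x P Q \<noteq> 0"
    thus "x \<in> T" using Ind_at_nonzero_root[of x P Q] critical_points_root[OF A, of Q]
      by (auto simp: T_def S_def Q_def)
  qed
  have I2: "Ind_lt a b (- Q) P = Ind_plus a (- Q) P + (\<Sum>x\<in>T. Ind_at x (- Q) P) - Ind_minus b (- Q) P"
  proof (rule Ind_lt_superset[OF fT TS])
    fix x assume "a < x" "x < b" "Ind_at x (- Q) P \<noteq> 0"
    thus "x \<in> T" using Ind_at_nonzero_root[of x "- Q" P] critical_points_root[OF A, of P]
      by (auto simp: T_def S_def P_def)
  qed
  have L: "{x\<in>S. x < b} = insert a T" and R: "{x\<in>S. a < x} = insert b T"
    using ab critical_points_subset[OF ab] critical_points_ends unfolding T_def S_def by force+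
  have aT: "a \<notin> T" and bT: "b \<notin> T" by (auto simp: T_def)
  have "edge_index a b A = Ind_lt a b P Q + Ind_lt a b (- Q) P"
    using ab by (simp add: edge_index_def Ind_def P_def Q_def)
  also have "\<dots> = (Ind_plus a P Q - Ind_plus a Q P)
      + (\<Sum>x\<in>T. (Ind_plus x P Q - Ind_plus x Q P) - (Ind_minus x P Q - Ind_minus x Q P))
      - (Ind_minus b P Q - Ind_minus b Q P)"
    unfolding I1 I2 by (simp add: Ind_plus_uminus Ind_minus_uminus Ind_at_uminus Ind_at_def
        sum_subtractf sum_negf sum.distrib algebra_simps)
  also have "\<dots> = (\<Sum>x\<in>insert a T. Ind_plus x P Q - Ind_plus x Q P)
      - (\<Sum>x\<in>insert b T. Ind_minus x P Q - Ind_minus x Q P)"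
    using fT aT bT by (simp add: sum_subtractf sum.distrib algebra_simps)
  finally show ?thesis unfolding L R P_def Q_def right_jump_def left_jump_def .
qed

theorem edge_index_mult:
  fixes A1 A2 :: "'a::real_closed_field cpx poly"
  assumes A1: "A1 \<noteq> 0" and A2: "A2 \<noteq> 0" and ab: "a < b"
  defines "K x \<equiv> sector_defect (local_coeff A1 x) (local_coeff A2 x)"
  shows "edge_index a b (A1 * A2) = edge_index a b A1 + edge_index a b A2 + of_int (K a - K b) / 2"
proof -
  define As where "As = [A1, A2, A1 * A2]"
  define S where "S = critical_points a b As"
  have S: "finite S" "a \<in> S" "b \<in> S" "\<And>x. x \<in> S \<Longrightarrow> a \<le> x \<and> x \<le> b"
    using critical_points_subset[OF ab, of As] unfolding S_def
    by (auto simp: finite_critical_points critical_points_ends)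
  define R where "R = {x\<in>S. x < b}"
  define L where "L = {y\<in>S. a < y}"
  define W where "W u v = sector_defect (poly A1 (cpx_of ((u + v) / 2))) (poly A2 (cpx_of ((u + v) / 2)))"
    for u v
  have right_defect: "right_jump (A1 * A2) x - right_jump A1 x - right_jump A2 x
      = of_int (K x - W x (next_in S x)) / 2" if "x \<in> R" for x
  proof -
    have x: "x \<in> critical_points a b As" "x < b" using that by (auto simp: R_def S_def)
    have xn: "x < next_in S x" using next_in_props(2)[OF S(1,3) x(2)] .
    have "parts_root_free A {x<..(x + next_in S x) / 2}" if "A \<in> set As" for A
      by (rule parts_root_free_subset[OF parts_root_free_after_critical_point[OF ab that x, folded S_def]]) (use xn in \<open>auto simp: field_simps\<close>)
    thus ?thesis
      using right_jump_mult[OF A1 A2, of x "(x + next_in S x) / 2"] xn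
      by (simp add: As_def K_def W_def field_simps)
  qed
  have left_defect: "left_jump (A1 * A2) y - left_jump A1 y - left_jump A2 y
      = of_int (K y - W (prev_in S y) y) / 2" if "y \<in> L" for y
  proof -
    have y: "y \<in> critical_points a b As" "a < y" using that by (auto simp: L_def S_def)
    have py: "prev_in S y < y" using prev_in_props(2)[OF S(1,2) y(2)] .
    have "parts_root_free A {(prev_in S y + y) / 2..<y}" if "A \<in> set As" for A
      by (rule parts_root_free_subset[OF parts_root_free_before_critical_point[OF ab that y, folded S_def]]) (use py in \<open>auto simp: field_simps\<close>)
    thus ?thesis
      using left_jump_mult[OF A1 A2, of "(prev_in S y + y) / 2" y] py
      by (simp add: As_def K_def W_def field_simps)
  qed
  define T where "T = {x\<in>S. a < x \<and> x < b}"
  have RT: "R = insert a T" and LT: "L = insert b T" and abT: "a \<notin> T" "b \<notin> T"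
    using ab S(2,3) S(4)[THEN conjunct1] S(4)[THEN conjunct2] unfolding R_def L_def T_def
    by (auto simp: le_less)
  have "edge_index a b (A1 * A2) - edge_index a b A1 - edge_index a b A2
      = (\<Sum>x\<in>R. right_jump (A1 * A2) x - right_jump A1 x - right_jump A2 x)
        - (\<Sum>y\<in>L. left_jump (A1 * A2) y - left_jump A1 y - left_jump A2 y)"
    using edge_index_local_sum[OF ab, of _ As]
    unfolding R_def L_def S_def by (simp add: As_def sum_subtractf)
  also have "\<dots> = (\<Sum>x\<in>R. of_int (K x - W x (next_in S x)) / 2) - (\<Sum>y\<in>L. of_int (K y - W (prev_in S y) y) / 2)"
    by (intro arg_cong2[where f = "(-)"] sum.cong refl) (simp_all add: right_defect left_defect)
  also have "\<dots> = ((\<Sum>x\<in>R. of_int (K x)) - (\<Sum>y\<in>L. of_int (K y))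
                  - (of_int (\<Sum>x\<in>R. W x (next_in S x)) - of_int (\<Sum>y\<in>L. W (prev_in S y) y))) / 2"
    by (simp add: sum_subtractf sum_divide_distrib[symmetric] field_simps)
  also have "\<dots> = of_int (K a - K b) / 2"
  proof -
    have "(\<Sum>x\<in>R. W x (next_in S x)) = (\<Sum>y\<in>L. W (prev_in S y) y)"
      unfolding R_def L_def by (rule sum_next_in_eq_sum_prev_in[OF S])
    moreover have "finite T" using S(1) by (simp add: T_def)
    ultimately show ?thesis using abT unfolding RT LT by simp
  qed
  finally show ?thesis by linarith
qed

section \<open>The boundary of a rectangle\<close>

definition slice_Y :: "'a::comm_ring_1 cpx poly poly \<Rightarrow> 'a \<Rightarrow> 'a cpx poly" where
  "slice_Y F y = poly F [:cpx_of y:]"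

definition slice_X :: "'a::comm_ring_1 cpx poly poly \<Rightarrow> 'a \<Rightarrow> 'a cpx poly" where
  "slice_X F x = map_poly (\<lambda>p. poly p (cpx_of x)) F"

lemma at_Y_re2: "at_Y (re2 F) y = Re_poly (slice_Y F y)"
proof (induction F)
  case 0 thus ?case by (simp add: at_Y_def re2_def slice_Y_def)
next
  case (pCons a F)
  have "at_Y (re2 (pCons a F)) y = map_poly Re_c a + [:y:] * at_Y (re2 F) y"
    by (simp add: at_Y_def re2_def map_poly_pCons)
  also have "\<dots> = Re_poly (slice_Y (pCons a F) y)"
    by (simp add: slice_Y_def Re_poly_mult pCons.IH Re_poly_def[symmetric])
  finally show ?case .
qed

lemma at_Y_im2: "at_Y (im2 F) y = Im_poly (slice_Y F y)"
proof (induction F)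
  case 0 thus ?case by (simp add: at_Y_def im2_def slice_Y_def)
next
  case (pCons a F)
  have "at_Y (im2 (pCons a F)) y = map_poly Im_c a + [:y:] * at_Y (im2 F) y"
    by (simp add: at_Y_def im2_def map_poly_pCons)
  also have "\<dots> = Im_poly (slice_Y (pCons a F) y)"
    by (simp add: slice_Y_def Im_poly_mult pCons.IH Im_poly_def[symmetric])
  finally show ?case .
qed

lemma at_X_re2: "at_X (re2 F) x = Re_poly (slice_X F x)"
proof -
  have "at_X (re2 F) x = map_poly ((\<lambda>p. poly p x) \<circ> map_poly Re_c) F"
    unfolding at_X_def re2_def by (rule map_poly_map_poly) simp_all
  also have "\<dots> = map_poly (Re_c \<circ> (\<lambda>p. poly p (cpx_of x))) F"
    by (rule map_poly_cong) (simp add: Re_c_poly Re_poly_def)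
  also have "\<dots> = Re_poly (slice_X F x)"
    unfolding Re_poly_def slice_X_def by (rule map_poly_map_poly[symmetric]) simp_all
  finally show ?thesis .
qed

lemma at_X_im2: "at_X (im2 F) x = Im_poly (slice_X F x)"
proof -
  have "at_X (im2 F) x = map_poly ((\<lambda>p. poly p x) \<circ> map_poly Im_c) F"
    unfolding at_X_def im2_def by (rule map_poly_map_poly) simp_all
  also have "\<dots> = map_poly (Im_c \<circ> (\<lambda>p. poly p (cpx_of x))) F"
    by (rule map_poly_cong) (simp add: Im_c_poly Im_poly_def)
  also have "\<dots> = Im_poly (slice_X F x)"
    unfolding Im_poly_def slice_X_def by (rule map_poly_map_poly[symmetric]) simp_all
  finally show ?thesis .
qed

lemma slice_Y_ii: "slice_Y ([:[:ii:]:] * F) y = smult ii (slice_Y F y)"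
  by (simp add: slice_Y_def)

lemma slice_X_ii: "slice_X ([:[:ii:]:] * F) x = smult ii (slice_X F x)"
  by (rule poly_eqI) (simp add: slice_X_def coeff_map_poly)

lemma slice_Y_mult: "slice_Y (F * G) y = slice_Y F y * slice_Y G y"
  by (simp add: slice_Y_def)

lemma slice_X_mult: "slice_X (F * G) x = slice_X F x * slice_X (G :: 'a::comm_ring_1 cpx poly poly) x"
  unfolding slice_X_def by (rule map_poly_mult_hom) simp_all

lemma Ind_swap: "a < b \<Longrightarrow> Ind b a P Q = - Ind a b P Q"
  by (simp add: Ind_def)

lemma edge_index_swap: "a < b \<Longrightarrow> edge_index b a A = - edge_index a b A"
  by (simp add: edge_index_def Ind_swap)

lemma Wind_edge_index:
  "Wind F x0 x1 y0 y1 = (edge_index x0 x1 (slice_Y F y0) + edge_index y0 y1 (slice_X F x1)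
     + edge_index x1 x0 (slice_Y F y1) + edge_index y1 y0 (slice_X F x0)) / 4"
  unfolding Wind_def wind_def edge_index_def at_Y_re2 at_Y_im2 at_X_re2 at_X_im2
    slice_Y_ii slice_X_ii Re_poly_smult_ii Im_poly_smult_ii
  by (simp add: field_simps)

theorem Wind_mult:
  fixes \<Phi>1 \<Phi>2 :: "'a::real_closed_field cpx poly poly"
  assumes nonzero: "\<And>y. slice_Y \<Phi>1 y \<noteq> 0" "\<And>y. slice_Y \<Phi>2 y \<noteq> 0"
      "\<And>x. slice_X \<Phi>1 x \<noteq> 0" "\<And>x. slice_X \<Phi>2 x \<noteq> 0"
    and corner: "\<And>x y. sector_defect (local_coeff (slice_X \<Phi>1 x) y) (local_coeff (slice_X \<Phi>2 x) y)
                       = sector_defect (local_coeff (slice_Y \<Phi>1 y) x) (local_coeff (slice_Y \<Phi>2 y) x)"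
    and x01: "x0 < x1" and y01: "y0 < y1"
  shows "Wind (\<Phi>1 * \<Phi>2) x0 x1 y0 y1 = Wind \<Phi>1 x0 x1 y0 y1 + Wind \<Phi>2 x0 x1 y0 y1"
proof -
  define K where "K x y = sector_defect (local_coeff (slice_Y \<Phi>1 y) x) (local_coeff (slice_Y \<Phi>2 y) x)" for x y
  have horizontal: "edge_index x0 x1 (slice_Y (\<Phi>1 * \<Phi>2) y) = edge_index x0 x1 (slice_Y \<Phi>1 y)
      + edge_index x0 x1 (slice_Y \<Phi>2 y) + of_int (K x0 y - K x1 y) / 2" for y
    unfolding slice_Y_mult K_def by (rule edge_index_mult[OF nonzero(1,2) x01])
  have vertical: "edge_index y0 y1 (slice_X (\<Phi>1 * \<Phi>2) x) = edge_index y0 y1 (slice_X \<Phi>1 x)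
      + edge_index y0 y1 (slice_X \<Phi>2 x) + of_int (K x y0 - K x y1) / 2" for x
    unfolding slice_X_mult K_def corner[symmetric] by (rule edge_index_mult[OF nonzero(3,4) y01])
  have W: "Wind \<Phi> x0 x1 y0 y1 = (edge_index x0 x1 (slice_Y \<Phi> y0) + edge_index y0 y1 (slice_X \<Phi> x1)
      - edge_index x0 x1 (slice_Y \<Phi> y1) - edge_index y0 y1 (slice_X \<Phi> x0)) / 4" for \<Phi>
    unfolding Wind_edge_index edge_index_swap[OF x01] edge_index_swap[OF y01] by simp
  show ?thesis unfolding W horizontal vertical by (simp add: field_simps)
qed

section \<open>The embedding of C[Z]\<close>

text \<open>\<open>embed u F = F(X + u Y)\<close>, so \<open>embed_frac F G\<close> is \<open>F(Z) * conj (G(Z))\<close> with \<open>Z = X + i Y\<close>.\<close>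

definition embed :: "'a::comm_ring_1 cpx \<Rightarrow> 'a cpx poly \<Rightarrow> 'a cpx poly poly" where
  "embed u F = poly (map_poly (\<lambda>c. [:[:c:]:]) F) [:[:0, 1:], [:u:]:]"

definition embed_frac :: "'a::comm_ring_1 cpx poly \<Rightarrow> 'a cpx poly \<Rightarrow> 'a cpx poly poly" where
  "embed_frac F G = embed ii F * embed (- ii) (map_poly cnj G)"

lemma embedZ_eq_embed: "embedZ F = embed ii F"
  by (simp add: embedZ_def embed_def)

lemma map_poly_cnj_mult: "map_poly cnj (p * q) = map_poly cnj p * map_poly cnj (q :: 'a::comm_ring_1 cpx poly)"
  by (rule map_poly_mult_hom) (simp_all add: cnj_add cnj_mult)

lemma map_poly_cnj_add: "map_poly cnj (p + q) = map_poly cnj p + map_poly cnj (q :: 'a::comm_ring_1 cpx poly)"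
  by (rule map_poly_add_hom) (simp_all add: cnj_add)

lemma conj2_embed: "conj2 (embed ii G) = embed (- ii) (map_poly cnj G)"
proof -
  have "conj2 (embed ii G) = poly (map_poly (map_poly (map_poly cnj)) (map_poly (\<lambda>c. [:[:c:]:]) G))
                              (map_poly (map_poly cnj) [:[:0, 1:], [:ii:]:])"
    unfolding conj2_def embed_def
    by (rule poly_map_poly_hom[symmetric])
      (simp_all add: map_poly_cnj_add map_poly_cnj_mult map_poly_add_hom map_poly_mult_hom)
  also have "map_poly (map_poly (map_poly cnj)) (map_poly (\<lambda>c. [:[:c:]:]) G)
             = map_poly (\<lambda>c. [:[:c:]:]) (map_poly cnj G)"
    by (rule poly_eqI) (simp add: coeff_map_poly map_poly_pCons)
  also have "map_poly (map_poly cnj) [:[:0, 1:], [:ii:]:] = [:[:0, 1:], [:- ii:]:]"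
    by (simp add: map_poly_pCons cnj_ii)
  finally show ?thesis unfolding embed_def .
qed

lemma embed_mult: "embed u (F * G) = embed u F * embed u G"
proof -
  have "map_poly (\<lambda>c. [:[:c:]:]) (F * G)
        = map_poly (\<lambda>c. [:[:c:]:]) F * map_poly (\<lambda>c. [:[:c:]:]) (G :: 'a::comm_ring_1 cpx poly)"
    by (rule map_poly_mult_hom) simp_all
  thus ?thesis by (simp add: embed_def)
qed

lemma slice_Y_embed: "slice_Y (embed u F) y = pcompose F [:u * cpx_of y, 1:]"
proof -
  have "slice_Y (embed u F) y = poly (map_poly (\<lambda>W. poly W [:cpx_of y:]) (map_poly (\<lambda>c. [:[:c:]:]) F))
                                    (poly [:[:0, 1:], [:u:]:] [:cpx_of y:])"
    unfolding slice_Y_def embed_def by (rule poly_map_poly_hom[symmetric]) simp_all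
  also have "map_poly (\<lambda>W. poly W [:cpx_of y:]) (map_poly (\<lambda>c. [:[:c:]:]) F) = map_poly (\<lambda>c. [:c:]) F"
    by (rule poly_eqI) (simp add: coeff_map_poly)
  also have "poly [:[:0, 1:], [:u:]:] [:cpx_of y:] = [:u * cpx_of y, 1:]"
    by (simp add: algebra_simps)
  finally show ?thesis by (simp add: pcompose_altdef)
qed

lemma slice_X_embed: "slice_X (embed u F) x = pcompose F [:cpx_of x, u:]"
proof -
  have "slice_X (embed u F) x = poly (map_poly (map_poly (\<lambda>p. poly p (cpx_of x))) (map_poly (\<lambda>c. [:[:c:]:]) F))
                              (map_poly (\<lambda>p. poly p (cpx_of x)) [:[:0, 1:], [:u:]:])"
    unfolding slice_X_def embed_def
    by (rule poly_map_poly_hom[symmetric]) (simp_all add: map_poly_add_hom map_poly_mult_hom)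
  also have "map_poly (map_poly (\<lambda>p. poly p (cpx_of x))) (map_poly (\<lambda>c. [:[:c:]:]) F) = map_poly (\<lambda>c. [:c:]) F"
    by (rule poly_eqI) (simp add: coeff_map_poly map_poly_pCons)
  also have "map_poly (\<lambda>p. poly p (cpx_of x)) [:[:0, 1:], [:u:]:] = [:cpx_of x, u:]"
    by (simp add: map_poly_pCons)
  finally show ?thesis by (simp add: pcompose_altdef)
qed

lemma pcompose_linear_shift: "pcompose (pcompose F [:c, u:]) [:d, 1:] = pcompose F [:c + u * d, u:]"
  for F :: "'b::comm_ring_1 poly"
proof -
  have "pcompose [:c, u:] [:d, 1:] = [:c + u * d, u:]" by (simp add: pcompose_pCons algebra_simps)
  thus ?thesis by (simp add: pcompose_assoc[symmetric])
qed

lemma pcompose_linear_split: "pcompose F [:z, u:] = pcompose (pcompose F [:z, 1:]) [:0, u:]"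
  for F :: "'b::comm_ring_1 poly"
proof -
  have "pcompose [:z, 1:] [:0, u:] = [:z, u:]" by (simp add: pcompose_pCons)
  thus ?thesis by (simp add: pcompose_assoc[symmetric])
qed

lemma pcompose_linear_nonzero: "F \<noteq> 0 \<Longrightarrow> u \<noteq> 0 \<Longrightarrow> pcompose F [:c, u:] \<noteq> (0 :: 'b::idom poly)"
  by (subst pcompose_eq_0_iff) auto

lemma trailing_coeff_pcompose_scale:
  fixes C :: "'b::idom poly"
  assumes C: "C \<noteq> 0" and u: "u \<noteq> 0"
  shows "trailing_coeff (pcompose C [:0, u:]) = u ^ trailing_degree C * trailing_coeff C"
proof -
  have c: "coeff (pcompose C [:0, u:]) i = u ^ i * coeff C i" for i by (rule coeff_pcompose_linear)
  have "trailing_degree (pcompose C [:0, u:]) = trailing_degree C"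
  proof (rule trailing_degree_eqI)
    show "coeff (pcompose C [:0, u:]) (trailing_degree C) \<noteq> 0"
      using trailing_coeff_nonzero[OF C] u by (simp add: c trailing_coeff_def)
    show "coeff (pcompose C [:0, u:]) i = 0" if "i < trailing_degree C" for i
      using coeff_below_trailing_degree[OF that] by (simp add: c)
  qed
  thus ?thesis by (simp add: trailing_coeff_def c)
qed

lemma map_poly_cnj_nonzero: "G \<noteq> 0 \<Longrightarrow> map_poly cnj G \<noteq> (0 :: 'a::comm_ring_1 cpx poly)"
  by (subst map_poly_eq_0_iff) (auto simp: cpx_eq_iff)

lemma translate_pcompose_monic:
  "translate (pcompose F [:u * cpx_of y, 1:]) x = pcompose F [:cpx_of x + u * cpx_of y, 1:]"
  unfolding translate_def pcompose_linear_shift by (simp add: add.commute)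

lemma translate_pcompose_linear:
  "translate (pcompose F [:cpx_of x, u:]) y = pcompose F [:cpx_of x + u * cpx_of y, u:]"
  unfolding translate_def pcompose_linear_shift ..

lemma local_coeff_corner:
  fixes F G :: "'a::linordered_field cpx poly"
  assumes F: "F \<noteq> 0" and G: "G \<noteq> 0"
  defines "\<Phi> \<equiv> embed ii F * embed (- ii) G"
  shows "\<exists>j. local_coeff (slice_X \<Phi> x) y = ii ^ j * local_coeff (slice_Y \<Phi> y) x"
proof -
  have nii: "ii \<noteq> (0 :: 'a cpx)" "- ii \<noteq> (0 :: 'a cpx)"
    by (simp_all add: cpx_eq_0_iff)
  define Fz where "Fz = pcompose F [:cpx_of x + ii * cpx_of y, 1:]"
  define Gz where "Gz = pcompose G [:cpx_of x + (- ii) * cpx_of y, 1:]"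
  have Fz: "Fz \<noteq> 0" unfolding Fz_def by (rule pcompose_linear_nonzero[OF F]) simp
  have Gz: "Gz \<noteq> 0" unfolding Gz_def by (rule pcompose_linear_nonzero[OF G]) simp
  have h: "translate (slice_Y \<Phi> y) x = Fz * Gz"
    unfolding \<Phi>_def slice_Y_mult slice_Y_embed translate_mult translate_pcompose_monic Fz_def Gz_def ..
  have v: "translate (slice_X \<Phi> x) y = pcompose Fz [:0, ii:] * pcompose Gz [:0, - ii:]"
    unfolding \<Phi>_def slice_X_mult slice_X_embed translate_mult translate_pcompose_linear Fz_def Gz_def
    by (subst (1 2) pcompose_linear_split) simp
  have gh: "local_coeff (slice_Y \<Phi> y) x = trailing_coeff Fz * trailing_coeff Gz"
    unfolding local_coeff_def h using trailing_mult[OF Fz Gz] by simp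
  have F0: "pcompose Fz [:0, ii:] \<noteq> 0" "pcompose Gz [:0, - ii:] \<noteq> 0"
    using pcompose_linear_nonzero[OF Fz nii(1)] pcompose_linear_nonzero[OF Gz nii(2)] by simp_all
  have gv: "local_coeff (slice_X \<Phi> x) y
            = (ii ^ trailing_degree Fz * trailing_coeff Fz) * ((- ii) ^ trailing_degree Gz * trailing_coeff Gz)"
    unfolding local_coeff_def v
    using trailing_mult[OF F0] trailing_coeff_pcompose_scale[OF Fz nii(1)] trailing_coeff_pcompose_scale[OF Gz nii(2)]
    by simp
  have "ii ^ 3 = - (ii :: 'a cpx)" by (simp add: cpx_eq_iff power3_eq_cube)
  hence "(- ii) ^ trailing_degree Gz = (ii :: 'a cpx) ^ (3 * trailing_degree Gz)"
    by (simp add: power_mult)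
  hence "local_coeff (slice_X \<Phi> x) y
         = ii ^ (trailing_degree Fz + 3 * trailing_degree Gz) * local_coeff (slice_Y \<Phi> y) x"
    unfolding gv gh by (simp add: power_add algebra_simps)
  thus ?thesis by blast
qed

lemma slice_Y_nonzero:
  fixes F G :: "'a::linordered_field cpx poly"
  assumes "F \<noteq> 0" "G \<noteq> 0"
  shows "slice_Y (embed ii F * embed (- ii) G) y \<noteq> 0"
proof -
  have a: "pcompose F [:ii * cpx_of y, 1:] \<noteq> 0"
    by (rule pcompose_linear_nonzero[OF assms(1)]) simp
  have b: "pcompose G [:(- ii) * cpx_of y, 1:] \<noteq> 0"
    by (rule pcompose_linear_nonzero[OF assms(2)]) simp
  have "slice_Y (embed ii F * embed (- ii) G) y
        = pcompose F [:ii * cpx_of y, 1:] * pcompose G [:(- ii) * cpx_of y, 1:]"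
    by (simp only: slice_Y_mult slice_Y_embed)
  thus ?thesis using a b by simp
qed

lemma slice_X_nonzero:
  fixes F G :: "'a::linordered_field cpx poly"
  assumes "F \<noteq> 0" "G \<noteq> 0"
  shows "slice_X (embed ii F * embed (- ii) G) x \<noteq> 0"
proof -
  have "ii \<noteq> (0 :: 'a cpx)" "- ii \<noteq> (0 :: 'a cpx)" by (simp_all add: cpx_eq_0_iff)
  hence a: "pcompose F [:cpx_of x, ii:] \<noteq> 0" and b: "pcompose G [:cpx_of x, - ii:] \<noteq> 0"
    using pcompose_linear_nonzero assms by blast+
  have "slice_X (embed ii F * embed (- ii) G) x = pcompose F [:cpx_of x, ii:] * pcompose G [:cpx_of x, - ii:]"
    by (simp only: slice_X_mult slice_X_embed)
  thus ?thesis using a b by simp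
qed

lemma Wind_frac_embed_frac: "Wind_frac F G x0 x1 y0 y1 = Wind (embed_frac F G) x0 x1 y0 y1"
  by (simp add: Wind_frac_def embed_frac_def embedZ_eq_embed conj2_embed)

lemma embed_frac_mult: "embed_frac (F * H) (G * I) = embed_frac F G * embed_frac H I"
  by (simp add: embed_frac_def embed_mult map_poly_cnj_mult algebra_simps)

lemma sector_defect_corner:
  fixes F1 G1 F2 G2 :: "'a::linordered_field cpx poly"
  assumes "F1 \<noteq> 0" "G1 \<noteq> 0" "F2 \<noteq> 0" "G2 \<noteq> 0"
  defines "\<Phi>1 \<equiv> embed ii F1 * embed (- ii) G1" and "\<Phi>2 \<equiv> embed ii F2 * embed (- ii) G2"
  shows "sector_defect (local_coeff (slice_X \<Phi>1 x) y) (local_coeff (slice_X \<Phi>2 x) y)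
       = sector_defect (local_coeff (slice_Y \<Phi>1 y) x) (local_coeff (slice_Y \<Phi>2 y) x)"
proof -
  obtain j1 where j1: "local_coeff (slice_X \<Phi>1 x) y = ii ^ j1 * local_coeff (slice_Y \<Phi>1 y) x"
    using local_coeff_corner assms unfolding \<Phi>1_def by blast
  obtain j2 where j2: "local_coeff (slice_X \<Phi>2 x) y = ii ^ j2 * local_coeff (slice_Y \<Phi>2 y) x"
    using local_coeff_corner assms unfolding \<Phi>2_def by blast
  have "local_coeff (slice_Y \<Phi>1 y) x \<noteq> 0" "local_coeff (slice_Y \<Phi>2 y) x \<noteq> 0"
    using local_coeff_nonzero slice_Y_nonzero assms unfolding \<Phi>1_def \<Phi>2_def by blast+
  thus ?thesis unfolding j1 j2 by (rule sector_defect_ii_power)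
qed

theorem proposition3p4:
  fixes F G H I :: "'a::real_closed_field cpx poly"
    and x0 x1 y0 y1 :: 'a
  assumes "F \<noteq> 0" "G \<noteq> 0" "H \<noteq> 0" "I \<noteq> 0"
    and "x0 < x1" "y0 < y1"
  shows "Wind_frac (F * H) (G * I) x0 x1 y0 y1
       = Wind_frac F G x0 x1 y0 y1 + Wind_frac H I x0 x1 y0 y1"
proof -
  have "map_poly cnj G \<noteq> 0" "map_poly cnj I \<noteq> 0"
    using assms(2,4) by (simp_all add: map_poly_cnj_nonzero)
  hence "Wind (embed_frac F G * embed_frac H I) x0 x1 y0 y1
       = Wind (embed_frac F G) x0 x1 y0 y1 + Wind (embed_frac H I) x0 x1 y0 y1"
    using assms unfolding embed_frac_def
    by (intro Wind_mult slice_Y_nonzero slice_X_nonzero sector_defect_corner) auto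
  thus ?thesis by (simp add: Wind_frac_embed_frac embed_frac_mult)
qed

end
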